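(* Assume conditions (1)–(4) of the context. Let $\epsilon>0$ and $T^*=\eta^{-1}\mathrm{poly}(\epsilon^{-1},\|\boldsymbol\mu\|_2^{-1},d^{-1}\sigma_p^{-2},\sigma_0^{-1},n,m,d)$. Then on the event $\mathcal E_{\mathrm{prelim}}$, for all $t\in[0,T^*]$, $$\|\nabla L_S(\mathbf W^{(t)})\|_F^2=O\big(\max\{\|\boldsymbol\mu\|_2^2,\sigma_p^2d\}\big)\cdot L_S(\mathbf W^{(t)}).$$
   Context: Data: nonzero $\boldsymbol\mu\in\mathbb R^d$, $\sigma_p>0$; sample $(\mathbf x,y)$, $\mathbf x=[\mathbf x_1^\top,\mathbf x_2^\top]^\top$: $y$ Rademacher, $\boldsymbol\xi\sim N(\mathbf 0,\sigma_p^2(\mathbf I-\boldsymbol\mu\boldsymbol\mu^\top\|\boldsymbol\mu\|_2^{-2}))$, one patch $y\boldsymbol\mu$, the other $\boldsymbol\xi$. Training set $\{(\mathbf x_i,y_i)\}_{i=1}^n$ i.i.d., noise patches $\boldsymbol\xi_i$. Network: $\sigma(z)=(\max\{0,z\})^q$, $q>2$; $F_j(\mathbf W_j,\mathbf x)=\frac1m\sum_{r=1}^m[\sigma(\langle\mathbf w_{j,r},\mathbf x_1\rangle)+\sigma(\langle\mathbf w_{j,r},\mathbf x_2\rangle)]$, $f=F_{+1}-F_{-1}$; $\ell(z)=\log(1+e^{-z})$, $L_S(\mathbf W)=\frac1n\sum_i\ell(y_if(\mathbf W,\mathbf x_i))$; $\|\mathbf W\|_F=\sqrt{\|\mathbf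 W_{+1}\|_F^2+\|\mathbf W_{-1}\|_F^2}$. Gradient descent $\mathbf W^{(t)}$ with step $\eta$ from i.i.d. $N(0,\sigma_0^2)$ initialization. Conditions: (1) $d=\tilde\Omega(m^{2\vee[4/(q-2)]}n^{4\vee[(2q-2)/(q-2)]})$; (2) $n,m=\Omega(\mathrm{polylog}(d))$; (3) $\eta\le\tilde O(\min\{\|\boldsymbol\mu\|_2^{-2},\sigma_p^{-2}d^{-1}\})$; (4) $\tilde O(nd^{-1/2})\min\{(\sigma_p\sqrt d)^{-1},\|\boldsymbol\mu\|_2^{-1}\}\le\sigma_0\le\tilde O(m^{-2/(q-2)}n^{-[1/(q-2)]\vee1})\min\{(\sigma_p\sqrt d)^{-1},\|\boldsymbol\mu\|_2^{-1}\}$. Standing assumption: $\delta\in(0,1)$ and $\mathcal E_{\mathrm{prelim}}$ is the high-probability event on which: both label classes have at least $n/4$ samples; $\sigma_p^2d/2\le\|\boldsymbol\xi_i\|_2^2\le3\sigma_p^2d/2$ and $|\langle\boldsymbol\xi_i,\boldsymbol\xi_{i'}\rangle|\le2\sigma_p^2\sqrt{d\log(4n^2/\delta)}$ for $i\ne i'$; $|\langle\mathbf w_{j,r}^{(0)},\boldsymbol\mu\rangle|\le\sqrt{2\log(8m/\delta)}\sigma_0\|\boldsymbol\mu\|_2$, $|\langle\mathbf w_{j,r}^{(0)},\boldsymbol\xi_i\rangle|\le2\sqrt{\log(8mn/\delta)}\sigma_0\sigma_p\sqrt d$, $\max_rj\langle\mathbf w_{j,r}^{(0)},\boldsymbol\mu\rangle\ge\sigma_0\|\boldsymbol\mu\|_2/2$,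 $\max_rj\langle\mathbf w_{j,r}^{(0)},\boldsymbol\xi_i\rangle\ge\sigma_0\sigma_p\sqrt d/4$. *)

theory Defs
  imports "HOL-Analysis.Analysis"
begin

text \<open>Vectors in R^d are represented as functions nat => real, only the
coordinates k < d being relevant.  The weights W j r (j in {1,-1}, r < m) are
such vectors, so a full parameter is W :: int => nat => nat => real.\<close>

definition vinner :: "nat \<Rightarrow> (nat \<Rightarrow> real) \<Rightarrow> (nat \<Rightarrow> real) \<Rightarrow> real" where
  "vinner d u v = (\<Sum>k<d. u k * v k)"

definition vnorm :: "nat \<Rightarrow> (nat \<Rightarrow> real) \<Rightarrow> real" where
  "vnorm d u = sqrt (vinner d u u)"

definition act :: "real \<Rightarrow> real \<Rightarrow> real" where
  "act q z = (max 0 z) powr q"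

definition Fj :: "real \<Rightarrow> nat \<Rightarrow> nat \<Rightarrow> (int \<Rightarrow> nat \<Rightarrow> nat \<Rightarrow> real) \<Rightarrow> int
                  \<Rightarrow> (nat \<Rightarrow> real) \<Rightarrow> (nat \<Rightarrow> real) \<Rightarrow> real" where
  "Fj q m d W j x1 x2 =
     (1 / real m) * (\<Sum>r<m. act q (vinner d (W j r) x1) + act q (vinner d (W j r) x2))"

definition fnet :: "real \<Rightarrow> nat \<Rightarrow> nat \<Rightarrow> (int \<Rightarrow> nat \<Rightarrow> nat \<Rightarrow> real)
                  \<Rightarrow> (nat \<Rightarrow> real) \<Rightarrow> (nat \<Rightarrow> real) \<Rightarrow> real" where
  "fnet q m d W x1 x2 = Fj q m d W 1 x1 x2 - Fj q m d W (-1) x1 x2"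

definition logloss :: "real \<Rightarrow> real" where
  "logloss z = ln (1 + exp (- z))"

text \<open>Training loss L_S(W).  Sample i has label y i and patches y_i mu and xi_i
(the order of the two patches is immaterial since F_j is symmetric in them).\<close>
definition LS :: "real \<Rightarrow> nat \<Rightarrow> nat \<Rightarrow> nat \<Rightarrow> (nat \<Rightarrow> real) \<Rightarrow> (nat \<Rightarrow> real)
                  \<Rightarrow> (nat \<Rightarrow> nat \<Rightarrow> real) \<Rightarrow> (int \<Rightarrow> nat \<Rightarrow> nat \<Rightarrow> real) \<Rightarrow> real" where
  "LS q m d n y mu xi W =
     (1 / real n) * (\<Sum>i<n. logloss (y i * fnet q m d W (\<lambda>k. y i * mu k) (xi i)))"

definition coord_upd :: "(int \<Rightarrow> nat \<Rightarrow> nat \<Rightarrow> real) \<Rightarrow> int \<Rightarrow> nat \<Rightarrow> nat \<Rightarrow> real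
                         \<Rightarrow> (int \<Rightarrow> nat \<Rightarrow> nat \<Rightarrow> real)" where
  "coord_upd W j r k s = (\<lambda>j' r' k'. if j' = j \<and> r' = r \<and> k' = k then W j' r' k' + s else W j' r' k')"

definition grad :: "((int \<Rightarrow> nat \<Rightarrow> nat \<Rightarrow> real) \<Rightarrow> real) \<Rightarrow> (int \<Rightarrow> nat \<Rightarrow> nat \<Rightarrow> real)
                    \<Rightarrow> int \<Rightarrow> nat \<Rightarrow> nat \<Rightarrow> real" where
  "grad L W j r k = deriv (\<lambda>s. L (coord_upd W j r k s)) 0"

definition frob2 :: "nat \<Rightarrow> nat \<Rightarrow> (int \<Rightarrow> nat \<Rightarrow> nat \<Rightarrow> real) \<Rightarrow> real" where
  "frob2 m d W = (\<Sum>j\<in>{1, -1::int}. \<Sum>r<m. \<Sum>k<d. (W j r k)\<^sup>2)"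

primrec gd :: "((int \<Rightarrow> nat \<Rightarrow> nat \<Rightarrow> real) \<Rightarrow> real) \<Rightarrow> real
               \<Rightarrow> (int \<Rightarrow> nat \<Rightarrow> nat \<Rightarrow> real) \<Rightarrow> nat \<Rightarrow> (int \<Rightarrow> nat \<Rightarrow> nat \<Rightarrow> real)" where
  "gd L eta W0 0 = W0"
| "gd L eta W0 (Suc t) = (\<lambda>j r k. gd L eta W0 t j r k - eta * grad L (gd L eta W0 t) j r k)"

definition E_prelim :: "real \<Rightarrow> nat \<Rightarrow> nat \<Rightarrow> nat \<Rightarrow> real \<Rightarrow> real \<Rightarrow> (nat \<Rightarrow> real) \<Rightarrow> (nat \<Rightarrow> real)
                        \<Rightarrow> (nat \<Rightarrow> nat \<Rightarrow> real) \<Rightarrow> (int \<Rightarrow> nat \<Rightarrow> nat \<Rightarrow> real) \<Rightarrow> bool" where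
  "E_prelim \<delta> m d n sigp sig0 y mu xi W0 \<longleftrightarrow>
     real (card {i\<in>{..<n}. y i = 1}) \<ge> real n / 4 \<and>
     real (card {i\<in>{..<n}. y i = -1}) \<ge> real n / 4 \<and>
     (\<forall>i<n. sigp\<^sup>2 * real d / 2 \<le> (vnorm d (xi i))\<^sup>2 \<and> (vnorm d (xi i))\<^sup>2 \<le> 3 * sigp\<^sup>2 * real d / 2) \<and>
     (\<forall>i<n. \<forall>i'<n. i \<noteq> i' \<longrightarrow>
        \<bar>vinner d (xi i) (xi i')\<bar> \<le> 2 * sigp\<^sup>2 * sqrt (real d * ln (4 * real n ^ 2 / \<delta>))) \<and>
     (\<forall>j\<in>{1,-1}. \<forall>r<m.
        \<bar>vinner d (W0 j r) mu\<bar> \<le> sqrt (2 * ln (8 * real m / \<delta>)) * sig0 * vnorm d mu) \<and>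
     (\<forall>j\<in>{1,-1}. \<forall>r<m. \<forall>i<n.
        \<bar>vinner d (W0 j r) (xi i)\<bar> \<le> 2 * sqrt (ln (8 * real m * real n / \<delta>)) * sig0 * sigp * sqrt (real d)) \<and>
     (\<forall>j\<in>{1,-1}. (MAX r\<in>{..<m}. of_int j * vinner d (W0 j r) mu) \<ge> sig0 * vnorm d mu / 2) \<and>
     (\<forall>j\<in>{1,-1}. \<forall>i<n. (MAX r\<in>{..<m}. of_int j * vinner d (W0 j r) (xi i)) \<ge> sig0 * sigp * sqrt (real d) / 4)"

end

theory Submission
  imports Defs
begin

text \<open>
  The gradient of \<open>L_S\<close> is the average over the samples of the gradients of
  \<open>\<ell>(z_i)\<close>, \<open>z_i = y_i f(W, x_i)\<close>. Since \<open>\<sigma>' \<le> q (1 + \<sigma>)\<close>, the squared norm of the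
  \<open>i\<close>-th one is at most \<open>2 q\<^sup>2 M \<ell>'(z_i)\<^sup>2 ((2 + F_1)\<^sup>2 + (2 + F_-1)\<^sup>2)\<close>, where \<open>M\<close> bounds
  \<open>\<parallel>\<mu>\<parallel>\<^sup>2\<close> and \<open>\<parallel>\<xi>_i\<parallel>\<^sup>2\<close>. If the output \<open>F_-y_i\<close> of the wrong class is at most 2, the
  bracket is at most \<open>(8 + max z_i 0)\<^sup>2\<close>, and \<open>\<ell>'(z)\<^sup>2 (8 + max z 0)\<^sup>2 \<le> 64 \<ell>(z)\<close>; Jensen's
  inequality over the samples then gives the theorem.

  It remains to show \<open>F_-y_i(W\<^sup>(\<^sup>t\<^sup>)) \<le> 2\<close> for \<open>t \<le> T\<^sup>*\<close>. For a neuron of the wrong class,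
  \<open>\<langle>w, y_i \<mu>\<rangle>\<close> only decreases from its small initial value, because the noise is orthogonal
  to \<open>\<mu>\<close>. Its noise correlation \<open>\<langle>w, \<xi>_i\<rangle>\<close> equals, up to an error controlled by the
  initialisation and the near-orthogonality of the \<open>\<xi>_i\<close>, the accumulated coefficient
  \<open>\<rho>_j,r,i\<close> of \<open>\<xi>_i / \<parallel>\<xi>_i\<parallel>\<^sup>2\<close> in \<open>w\<close>. An induction over the iterations shows that these
  coefficients are non-positive for the wrong class and stay below a cap \<open>R\<close> for the correct
  class: once \<open>\<langle>w, \<xi>_i\<rangle> \<ge> R/2\<close>, the sample is fitted so well that \<open>\<ell>'(z_i)\<close>, and with it the
  growth of the coefficient, is \<open>exp (- R\<^sup>2 / 8m)\<close>-small, and \<open>R\<^sup>2 \<approx> 8 m log T\<^sup>*\<close> makes this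
  negligible over \<open>T\<^sup>*\<close> steps.
\<close>

section \<open>Activation and logistic loss\<close>

definition dact :: "real \<Rightarrow> real \<Rightarrow> real" where
  "dact q z = q * max 0 z powr (q - 1)"

lemma has_real_derivative_act:
  assumes "q > 1"
  shows "(act q has_real_derivative dact q z) (at z)"
proof -
  consider "z > 0" | "z < 0" | "z = 0" by linarith
  then show ?thesis
  proof cases
    case 1
    have "eventually (\<lambda>x. act q x = x powr q) (nhds z)"
      using 1 eventually_nhds_in_open[of "{0<..}" z] by (auto simp: act_def elim!: eventually_mono)
    then show ?thesis
      using has_real_derivative_powr[OF 1, of q] 1 by (simp add: DERIV_cong_ev dact_def)
  next
    case 2
    have "eventually (\<lambda>x. act q x = 0) (nhds z)"
      using 2 eventually_nhds_in_open[of "{..<0}" z] by (auto simp: act_def elim!: eventually_mono)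
    then show ?thesis
      using 2 by (simp add: DERIV_cong_ev dact_def)
  next
    case 3
    have "((\<lambda>h. (act q (0 + h) - act q 0) / h) \<longlongrightarrow> 0) (at 0)"
    proof (rule Lim_null_comparison)
      show "eventually (\<lambda>h. norm ((act q (0 + h) - act q 0) / h) \<le> \<bar>h\<bar> powr (q - 1)) (at 0)"
      proof (rule always_eventually, rule allI)
        fix h :: real
        show "norm ((act q (0 + h) - act q 0) / h) \<le> \<bar>h\<bar> powr (q - 1)"
          using assms by (cases "h > 0") (simp_all add: act_def powr_diff divide_simps)
      qed
      show "((\<lambda>h. \<bar>h\<bar> powr (q - 1)) \<longlongrightarrow> 0) (at 0)"
        using assms by (auto intro!: tendsto_zero_powrI tendsto_eq_intros)
    qed
    then show ?thesis
      using 3 assms by (simp add: DERIV_def dact_def)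
  qed
qed

lemma act_nonneg: "act q z \<ge> 0"
  by (simp add: act_def)

lemma dact_nonneg: "q \<ge> 0 \<Longrightarrow> dact q z \<ge> 0"
  by (simp add: dact_def)

lemma dact_eq_0: "z \<le> 0 \<Longrightarrow> dact q z = 0"
  by (simp add: dact_def max_def)

lemma act_le_1: "q > 0 \<Longrightarrow> z \<le> 1 \<Longrightarrow> act q z \<le> 1"
  by (auto simp: act_def max_def intro!: powr_le1)

lemma dact_le_q: "q \<ge> 1 \<Longrightarrow> z \<le> 1 \<Longrightarrow> dact q z \<le> q"
  by (auto simp: dact_def max_def intro!: powr_le1 mult_left_le)

lemma dact_le_act: "q \<ge> 1 \<Longrightarrow> z \<ge> 1 \<Longrightarrow> dact q z \<le> q * act q z"
  by (auto simp: dact_def act_def intro!: mult_left_mono powr_mono)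

lemma dact_le:
  assumes "q \<ge> 1"
  shows "dact q z \<le> q * (1 + act q z)"
proof -
  have "0 \<le> q * act q z"
    using assms act_nonneg[of q z] by simp
  then show ?thesis
    using assms dact_le_q[OF assms, of z] dact_le_act[OF assms, of z]
    by (cases "z \<le> 1") (auto simp: algebra_simps)
qed

lemma square_le_act: "q \<ge> 2 \<Longrightarrow> z \<ge> 1 \<Longrightarrow> z\<^sup>2 \<le> act q z"
  using powr_mono[of 2 q z] by (simp add: act_def max_def powr_numeral)

lemma square_one_plus_half_le_exp:
  fixes z :: real
  assumes "z \<ge> 0"
  shows "(1 + z / 2)\<^sup>2 \<le> exp z"
proof -
  have "(1 + z / 2)\<^sup>2 \<le> (exp (z / 2))\<^sup>2"
    using assms by (intro power_mono) auto
  then show ?thesis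
    by (simp add: power2_eq_square flip: exp_add)
qed

lemma mult_exp_neg_le_1:
  fixes v :: real
  assumes "v \<ge> 0"
  shows "v * exp (- v) \<le> 1"
proof -
  have "v \<le> exp v"
    using exp_ge_add_one_self[of v] by linarith
  then show ?thesis
    by (simp add: exp_minus field_simps)
qed

lemma mult_exp_neg_le_exp_half:
  fixes v :: real
  assumes "v \<ge> 0"
  shows "v * exp (- v) \<le> exp (- v / 2)"
proof -
  have "v \<le> (1 + (v / 2) / 2)\<^sup>2"
    using zero_le_power2[of "1 - v / 4"] by (simp add: power2_eq_square algebra_simps)
  also have "\<dots> \<le> exp (v / 2)"
    using assms by (intro square_one_plus_half_le_exp) simp
  finally have "v * exp (- v) \<le> exp (v / 2) * exp (- v)"
    by (intro mult_right_mono) auto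
  then show ?thesis
    by (simp flip: exp_add)
qed

lemma dact_mult_exp_neg_act_le:
  assumes "q \<ge> 1" "c \<ge> 1"
  shows "dact q z / c * exp (- (act q z / c)) \<le> q"
proof (cases "z \<le> 1")
  case True
  have "dact q z / c \<le> q"
    using dact_le_q[OF assms(1) True] dact_nonneg[of q z] assms by (simp add: divide_le_eq order_trans)
  moreover have "exp (- (act q z / c)) \<le> 1"
    using act_nonneg[of q z] assms by simp
  ultimately have "dact q z / c * exp (- (act q z / c)) \<le> q * 1"
    using dact_nonneg[of q z] assms by (intro mult_mono) auto
  then show ?thesis
    by simp
next
  case False
  define v where "v = act q z / c"
  have "v \<ge> 0"
    unfolding v_def using act_nonneg[of q z] assms by simp
  have "dact q z / c \<le> q * v"
    unfolding v_def using dact_le_act[OF assms(1), of z] False assms by (simp add: divide_right_mono)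
  then have "dact q z / c * exp (- v) \<le> q * v * exp (- v)"
    by (intro mult_right_mono) auto
  also have "\<dots> \<le> q"
    using mult_exp_neg_le_1[OF \<open>v \<ge> 0\<close>] assms by (simp add: mult.assoc mult_left_le)
  finally show ?thesis
    by (simp add: v_def)
qed

lemma dact_mult_exp_neg_act_le_exp_half:
  assumes "q \<ge> 1" "c \<ge> 1" "z \<ge> 1"
  shows "dact q z / c * exp (- (act q z / c)) \<le> q * exp (- (act q z / c) / 2)"
proof -
  define v where "v = act q z / c"
  have "v \<ge> 0"
    unfolding v_def using act_nonneg[of q z] assms by simp
  have "dact q z / c \<le> q * v"
    unfolding v_def using dact_le_act[OF assms(1,3)] assms by (simp add: divide_right_mono)
  then have "dact q z / c * exp (- v) \<le> q * v * exp (- v)"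
    by (intro mult_right_mono) auto
  also have "\<dots> \<le> q * exp (- v / 2)"
    using mult_exp_neg_le_exp_half[OF \<open>v \<ge> 0\<close>] assms by (simp add: mult.assoc)
  finally show ?thesis
    by (simp add: v_def)
qed

lemma dact_mult_exp_neg_act_le_tail:
  assumes "q \<ge> 2" "c \<ge> 1" "R \<ge> 2" "z \<ge> R / 2"
  shows "dact q z / c * exp (- (act q z / c)) \<le> q * exp (- (R\<^sup>2 / (8 * c)))"
proof -
  have "(R / 2)\<^sup>2 \<le> z\<^sup>2"
    using assms by (intro power_mono) auto
  also have "\<dots> \<le> act q z"
    using assms by (intro square_le_act) auto
  finally have "R\<^sup>2 / (8 * c) \<le> act q z / c / 2"
    using assms by (simp add: power_divide field_simps)
  then have "q * exp (- (act q z / c) / 2) \<le> q * exp (- (R\<^sup>2 / (8 * c)))"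
    using assms by simp
  moreover have "dact q z / c * exp (- (act q z / c)) \<le> q * exp (- (act q z / c) / 2)"
    using assms by (intro dact_mult_exp_neg_act_le_exp_half) auto
  ultimately show ?thesis
    by linarith
qed

definition dlogloss :: "real \<Rightarrow> real" where
  "dlogloss z = - 1 / (1 + exp z)"

lemma has_real_derivative_logloss: "(logloss has_real_derivative dlogloss z) (at z)"
proof -
  have "((\<lambda>z. ln (1 + exp (- z))) has_real_derivative (1 / (1 + exp (-z))) * (exp (-z) * (-1))) (at z)"
    by (auto intro!: derivative_eq_intros simp: add_pos_pos)
  moreover have "(1 / (1 + exp (-z))) * (exp (-z) * (-1)) = dlogloss z"
    by (simp add: dlogloss_def exp_minus field_simps add_pos_pos)
  ultimately show ?thesis
    unfolding logloss_def by simp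
qed

lemma logloss_nonneg: "logloss z \<ge> 0"
  by (simp add: logloss_def)

lemma dlogloss_neg: "dlogloss z < 0"
  by (simp add: dlogloss_def add_pos_pos)

lemma abs_dlogloss: "\<bar>dlogloss z\<bar> = 1 / (1 + exp z)"
  by (simp add: dlogloss_def add_pos_pos)

lemma abs_dlogloss_le_1: "\<bar>dlogloss z\<bar> \<le> 1"
  unfolding abs_dlogloss by (simp add: add_pos_pos)

lemma abs_dlogloss_le_exp: "\<bar>dlogloss z\<bar> \<le> exp (- z)"
  unfolding abs_dlogloss by (simp add: exp_minus field_simps add_pos_pos)

lemma abs_dlogloss_le_logloss: "\<bar>dlogloss z\<bar> \<le> logloss z"
proof -
  define p where "p = 1 / (1 + exp (- z))"
  have pos: "1 + exp z > 0" "1 + exp (- z) > 0" "p > 0"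
    by (simp_all add: p_def add_pos_pos)
  then have "ln p \<le> p - 1"
    by (intro ln_le_minus_one) auto
  moreover have "ln p = - logloss z"
    by (simp add: p_def logloss_def ln_div add_pos_pos)
  moreover have "p - 1 = - \<bar>dlogloss z\<bar>"
    using pos by (simp add: p_def abs_dlogloss exp_minus field_simps)
  ultimately show ?thesis
    by linarith
qed

text \<open>The factor \<open>(8 + max z 0)\<^sup>2\<close> absorbs the size of the network output.\<close>

lemma dlogloss_square_le_logloss: "(dlogloss z)\<^sup>2 * (8 + max z 0)\<^sup>2 \<le> 64 * logloss z"
proof -
  have "\<bar>dlogloss z\<bar> * (8 + max z 0)\<^sup>2 \<le> 64"
  proof (cases "z \<le> 0")
    case True
    then show ?thesis
      using abs_dlogloss_le_1[of z] by (simp add: max_def)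
  next
    case False
    have "(8 + z)\<^sup>2 \<le> 64 * (1 + z / 2)\<^sup>2"
      using False by (simp add: power2_eq_square algebra_simps)
    also have "\<dots> \<le> 64 * exp z"
      using False by (simp add: square_one_plus_half_le_exp)
    finally have "exp (- z) * (8 + z)\<^sup>2 \<le> 64"
      by (simp add: exp_minus field_simps)
    moreover have "\<bar>dlogloss z\<bar> * (8 + z)\<^sup>2 \<le> exp (- z) * (8 + z)\<^sup>2"
      using abs_dlogloss_le_exp[of z] by (intro mult_right_mono) auto
    ultimately have "\<bar>dlogloss z\<bar> * (8 + z)\<^sup>2 \<le> 64"
      by linarith
    then show ?thesis
      using False by (simp add: max_def)
  qed
  then have "\<bar>dlogloss z\<bar> * (\<bar>dlogloss z\<bar> * (8 + max z 0)\<^sup>2) \<le> logloss z * 64"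
    by (intro mult_mono abs_dlogloss_le_logloss) (auto simp: logloss_nonneg)
  then show ?thesis
    by (simp add: power2_eq_square mult_ac)
qed

section \<open>The gradient of the training loss\<close>

lemma vinner_self_nonneg: "vinner d u u \<ge> 0"
  unfolding vinner_def by (intro sum_nonneg) auto

lemma vinner_commute: "vinner d u v = vinner d v u"
  unfolding vinner_def by (simp add: mult.commute)

lemma vinner_scale_left: "vinner d (\<lambda>k. c * u k) v = c * vinner d u v"
  unfolding vinner_def by (simp add: sum_distrib_left mult.assoc)

lemma vinner_scale_right: "vinner d u (\<lambda>k. c * v k) = c * vinner d u v"
  unfolding vinner_def by (simp add: sum_distrib_left algebra_simps)

lemma vnorm_square: "(vnorm d u)\<^sup>2 = vinner d u u"
  unfolding vnorm_def using vinner_self_nonneg by simp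

lemma coord_upd_0 [simp]: "coord_upd W j r k 0 = W"
  unfolding coord_upd_def by (intro ext) simp

lemma vinner_coord_upd:
  assumes "k < d"
  shows "vinner d (coord_upd W j r k s j' r') x
         = vinner d (W j' r') x + (if j' = j \<and> r' = r then s * x k else 0)"
proof -
  have "vinner d (coord_upd W j r k s j' r') x
      = (\<Sum>k'<d. W j' r' k' * x k' + (if j' = j \<and> r' = r \<and> k' = k then s * x k' else 0))"
    unfolding vinner_def coord_upd_def by (rule sum.cong) (auto simp: algebra_simps)
  also have "\<dots> = vinner d (W j' r') x + (if j' = j \<and> r' = r then s * x k else 0)"
    using assms by (cases "j' = j \<and> r' = r") (auto simp: sum.distrib vinner_def)
  finally show ?thesis .
qed

lemma Fj_coord_upd:
  assumes "r < m" "k < d"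
  shows "Fj q m d (coord_upd W j r k s) j' x1 x2 = Fj q m d W j' x1 x2
     + (if j' = j then (act q (vinner d (W j r) x1 + s * x1 k) - act q (vinner d (W j r) x1)
          + act q (vinner d (W j r) x2 + s * x2 k) - act q (vinner d (W j r) x2)) / real m else 0)"
proof -
  define D where "D = act q (vinner d (W j r) x1 + s * x1 k) - act q (vinner d (W j r) x1)
          + act q (vinner d (W j r) x2 + s * x2 k) - act q (vinner d (W j r) x2)"
  have "(\<Sum>r'<m. act q (vinner d (coord_upd W j r k s j' r') x1) + act q (vinner d (coord_upd W j r k s j' r') x2))
      = (\<Sum>r'<m. (act q (vinner d (W j' r') x1) + act q (vinner d (W j' r') x2)) + (if j' = j \<and> r' = r then D else 0))"
    by (rule sum.cong) (auto simp: vinner_coord_upd[OF assms(2)] D_def)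
  also have "\<dots> = (\<Sum>r'<m. act q (vinner d (W j' r') x1) + act q (vinner d (W j' r') x2)) + (if j' = j then D else 0)"
    using assms by (simp add: sum.distrib)
  finally show ?thesis
    unfolding Fj_def D_def[symmetric] by (simp add: distrib_left)
qed

lemma fnet_coord_upd:
  assumes "r < m" "k < d" "j \<in> {1, -1}"
  shows "fnet q m d (coord_upd W j r k s) x1 x2 = fnet q m d W x1 x2
     + of_int j * (act q (vinner d (W j r) x1 + s * x1 k) - act q (vinner d (W j r) x1)
          + act q (vinner d (W j r) x2 + s * x2 k) - act q (vinner d (W j r) x2)) / real m"
  using assms unfolding fnet_def by (auto simp: Fj_coord_upd diff_divide_distrib add_divide_distrib)

definition sample_grad :: "real \<Rightarrow> nat \<Rightarrow> nat \<Rightarrow> (int \<Rightarrow> nat \<Rightarrow> nat \<Rightarrow> real) \<Rightarrow> real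
    \<Rightarrow> (nat \<Rightarrow> real) \<Rightarrow> (nat \<Rightarrow> real) \<Rightarrow> int \<Rightarrow> nat \<Rightarrow> nat \<Rightarrow> real" where
  "sample_grad q m d W yi x1 x2 j r k =
     dlogloss (yi * fnet q m d W x1 x2) * yi * of_int j
       * (dact q (vinner d (W j r) x1) * x1 k + dact q (vinner d (W j r) x2) * x2 k) / real m"

lemma has_real_derivative_sample_loss:
  assumes "q > 1" "r < m" "k < d" "j \<in> {1, -1}"
  shows "((\<lambda>s. logloss (yi * fnet q m d (coord_upd W j r k s) x1 x2))
           has_real_derivative sample_grad q m d W yi x1 x2 j r k) (at 0)"
proof -
  define a1 a2 where "a1 = vinner d (W j r) x1" and "a2 = vinner d (W j r) x2"
  have act_line: "((\<lambda>s. act q (a + s * u)) has_real_derivative dact q a * u) (at 0)" for a u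
  proof -
    have "((\<lambda>s. a + s * u) has_real_derivative u) (at 0)"
      by (auto intro!: derivative_eq_intros)
    from DERIV_chain2[OF _ this] show ?thesis
      using has_real_derivative_act[OF assms(1), of a] by simp
  qed
  have "((\<lambda>s. yi * fnet q m d (coord_upd W j r k s) x1 x2) has_real_derivative
          yi * (of_int j * (dact q a1 * x1 k + dact q a2 * x2 k) / real m)) (at 0)"
    unfolding fnet_coord_upd[OF assms(2-4)] a1_def[symmetric] a2_def[symmetric]
    using act_line[of a1 "x1 k"] act_line[of a2 "x2 k"] assms(2) by (auto intro!: derivative_eq_intros)
  from DERIV_chain2[OF has_real_derivative_logloss this] show ?thesis
    by (simp add: sample_grad_def a1_def a2_def mult_ac)
qed

lemma grad_LS:
  assumes "q > 1" "r < m" "k < d" "j \<in> {1, -1}"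
  shows "grad (LS q m d n y mu xi) W j r k =
           (1 / real n) * (\<Sum>i<n. sample_grad q m d W (y i) (\<lambda>k. y i * mu k) (xi i) j r k)"
  unfolding grad_def LS_def
  by (intro DERIV_imp_deriv DERIV_cmult DERIV_sum has_real_derivative_sample_loss assms)

lemma vinner_sample_grad:
  "vinner d (sample_grad q m d W yi x1 x2 j r) v =
     dlogloss (yi * fnet q m d W x1 x2) * yi * of_int j
       * (dact q (vinner d (W j r) x1) * vinner d x1 v + dact q (vinner d (W j r) x2) * vinner d x2 v) / real m"
proof -
  define c A B where "c = dlogloss (yi * fnet q m d W x1 x2) * yi * of_int j / real m"
    and "A = dact q (vinner d (W j r) x1)" and "B = dact q (vinner d (W j r) x2)"
  have "vinner d (sample_grad q m d W yi x1 x2 j r) v = (\<Sum>k<d. c * (A * (x1 k * v k) + B * (x2 k * v k)))"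
    unfolding vinner_def sample_grad_def c_def A_def B_def by (intro sum.cong refl) (simp add: field_simps)
  also have "\<dots> = c * (A * vinner d x1 v + B * vinner d x2 v)"
    by (simp add: vinner_def sum_distrib_left sum.distrib algebra_simps)
  finally show ?thesis
    unfolding c_def A_def B_def by simp
qed

section \<open>Bounding the gradient by the loss\<close>

lemma sum_squares_le_square_sum:
  fixes f :: "'a \<Rightarrow> real"
  assumes "\<And>x. x \<in> A \<Longrightarrow> f x \<ge> 0"
  shows "(\<Sum>x\<in>A. (f x)\<^sup>2) \<le> (\<Sum>x\<in>A. f x)\<^sup>2"
proof (cases "finite A")
  case True
  have "(\<Sum>x\<in>A. (f x)\<^sup>2) \<le> (\<Sum>x\<in>A. f x * (\<Sum>x\<in>A. f x))"
    using assms True by (intro sum_mono) (auto simp: power2_eq_square intro!: mult_left_mono member_le_sum)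
  then show ?thesis
    by (simp add: power2_eq_square sum_distrib_right)
qed simp

lemma mean_square_le:
  fixes x :: "nat \<Rightarrow> real"
  assumes "n \<ge> 1"
  shows "((1 / real n) * (\<Sum>i<n. x i))\<^sup>2 \<le> (1 / real n) * (\<Sum>i<n. (x i)\<^sup>2)"
proof -
  have "(\<Sum>i<n. x i)\<^sup>2 / (real n)\<^sup>2 \<le> (\<Sum>i<n. (x i)\<^sup>2) * real n / (real n)\<^sup>2"
    using sum_squared_le_sum_of_squares[of x "{..<n}"] by (intro divide_right_mono) auto
  then show ?thesis
    using assms by (simp add: power2_eq_square power_divide field_simps)
qed

lemma frob2_mean_le:
  assumes "n \<ge> 1"
  shows "frob2 m d (\<lambda>j r k. (1 / real n) * (\<Sum>i<n. G i j r k)) \<le> (1 / real n) * (\<Sum>i<n. frob2 m d (G i))"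
proof -
  have "frob2 m d (\<lambda>j r k. (1 / real n) * (\<Sum>i<n. G i j r k))
      \<le> (\<Sum>j\<in>{1, -1::int}. \<Sum>r<m. \<Sum>k<d. (1 / real n) * (\<Sum>i<n. (G i j r k)\<^sup>2))"
    unfolding frob2_def by (intro sum_mono mean_square_le assms)
  also have "\<dots> = (1 / real n) * (\<Sum>i<n. frob2 m d (G i))"
    unfolding frob2_def sum_distrib_left[symmetric] by (simp add: sum.swap[of _ "{..<n}"])
  finally show ?thesis .
qed

lemma sum_square_comb_le:
  assumes "vinner d u u \<le> M" "vinner d v v \<le> M" "A \<ge> 0" "B \<ge> 0"
  shows "(\<Sum>k<d. (A * u k + B * v k)\<^sup>2) \<le> 2 * M * (A + B)\<^sup>2"
proof -
  have "(\<Sum>k<d. (A * u k + B * v k)\<^sup>2) \<le> (\<Sum>k<d. 2 * A\<^sup>2 * (u k * u k) + 2 * B\<^sup>2 * (v k * v k))"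
  proof (intro sum_mono)
    fix k
    have "0 \<le> (A * u k - B * v k)\<^sup>2"
      by simp
    then show "(A * u k + B * v k)\<^sup>2 \<le> 2 * A\<^sup>2 * (u k * u k) + 2 * B\<^sup>2 * (v k * v k)"
      by (simp add: power2_eq_square algebra_simps)
  qed
  also have "\<dots> = 2 * A\<^sup>2 * vinner d u u + 2 * B\<^sup>2 * vinner d v v"
    by (simp add: vinner_def sum.distrib sum_distrib_left)
  also have "\<dots> \<le> 2 * M * (A\<^sup>2 + B\<^sup>2)"
    using mult_right_mono[OF assms(1), of "2 * A\<^sup>2"] mult_right_mono[OF assms(2), of "2 * B\<^sup>2"]
    by (simp add: algebra_simps)
  also have "\<dots> \<le> 2 * M * (A + B)\<^sup>2"
    using assms order_trans[OF vinner_self_nonneg assms(1)] by (intro mult_left_mono) (auto simp: power2_sum)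
  finally show ?thesis .
qed

lemma mean_dact_le_Fj:
  assumes "q \<ge> 1" "m \<ge> 1"
  shows "(\<Sum>r<m. dact q (vinner d (W j r) x1) + dact q (vinner d (W j r) x2)) / real m
           \<le> q * (2 + Fj q m d W j x1 x2)"
proof -
  have "(\<Sum>r<m. dact q (vinner d (W j r) x1) + dact q (vinner d (W j r) x2))
      \<le> (\<Sum>r<m. q * (2 + (act q (vinner d (W j r) x1) + act q (vinner d (W j r) x2))))"
  proof (intro sum_mono)
    fix r
    show "dact q (vinner d (W j r) x1) + dact q (vinner d (W j r) x2)
        \<le> q * (2 + (act q (vinner d (W j r) x1) + act q (vinner d (W j r) x2)))"
      using dact_le[OF assms(1), of "vinner d (W j r) x1"] dact_le[OF assms(1), of "vinner d (W j r) x2"]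
      by (simp add: algebra_simps)
  qed
  also have "\<dots> = q * (2 * real m + (\<Sum>r<m. act q (vinner d (W j r) x1) + act q (vinner d (W j r) x2)))"
    by (simp add: sum.distrib sum_distrib_left algebra_simps)
  finally show ?thesis
    using assms by (simp add: Fj_def field_simps)
qed

lemma neuron_grads_square_le:
  assumes "q \<ge> 1" "m \<ge> 1" "vinner d x1 x1 \<le> M" "vinner d x2 x2 \<le> M"
  shows "(\<Sum>r<m. \<Sum>k<d. ((dact q (vinner d (W j r) x1) * x1 k + dact q (vinner d (W j r) x2) * x2 k) / real m)\<^sup>2)
           \<le> 2 * M * q\<^sup>2 * (2 + Fj q m d W j x1 x2)\<^sup>2"
proof -
  define P where "P r = (dact q (vinner d (W j r) x1) + dact q (vinner d (W j r) x2)) / real m" for r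
  have M: "M \<ge> 0"
    using order_trans[OF vinner_self_nonneg assms(3)] .
  have P: "P r \<ge> 0" for r
    using assms(1) by (simp add: P_def dact_nonneg)
  have "(\<Sum>r<m. \<Sum>k<d. ((dact q (vinner d (W j r) x1) * x1 k + dact q (vinner d (W j r) x2) * x2 k) / real m)\<^sup>2)
      \<le> (\<Sum>r<m. 2 * M * (P r)\<^sup>2)"
  proof (intro sum_mono)
    fix r
    have "(\<Sum>k<d. ((dact q (vinner d (W j r) x1) / real m) * x1 k + (dact q (vinner d (W j r) x2) / real m) * x2 k)\<^sup>2)
        \<le> 2 * M * (P r)\<^sup>2"
      unfolding P_def add_divide_distrib using assms by (intro sum_square_comb_le) (auto simp: dact_nonneg)
    then show "(\<Sum>k<d. ((dact q (vinner d (W j r) x1) * x1 k + dact q (vinner d (W j r) x2) * x2 k) / real m)\<^sup>2)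
        \<le> 2 * M * (P r)\<^sup>2"
      by (simp add: add_divide_distrib)
  qed
  also have "\<dots> \<le> 2 * M * (\<Sum>r<m. P r)\<^sup>2"
    using M P by (simp add: sum_distrib_left[symmetric] sum_squares_le_square_sum mult_left_mono)
  also have "\<dots> \<le> 2 * M * (q * (2 + Fj q m d W j x1 x2))\<^sup>2"
    using mean_dact_le_Fj[OF assms(1,2)] M P
    by (intro mult_left_mono power_mono sum_nonneg) (auto simp: P_def sum_divide_distrib[symmetric])
  finally show ?thesis
    by (simp add: power_mult_distrib)
qed

lemma two_class_square_le:
  fixes F F' :: real
  assumes "F \<ge> 0" "F' \<ge> 0" "F' \<le> 2"
  shows "(2 + F)\<^sup>2 + (2 + F')\<^sup>2 \<le> (8 + max (F - F') 0)\<^sup>2"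
proof -
  have "(2 + F)\<^sup>2 \<le> (4 + max (F - F') 0)\<^sup>2" "(2 + F')\<^sup>2 \<le> 4\<^sup>2"
    using assms by (intro power_mono; simp)+
  moreover have "(4 + max (F - F') 0)\<^sup>2 + 4\<^sup>2 \<le> (8 + max (F - F') 0)\<^sup>2"
    by (simp add: power2_eq_square algebra_simps)
  ultimately show ?thesis
    by linarith
qed

lemma Fj_nonneg: "Fj q m d W j x1 x2 \<ge> 0"
  unfolding Fj_def by (intro mult_nonneg_nonneg sum_nonneg add_nonneg_nonneg act_nonneg) auto

lemma class_outputs_square_le:
  assumes yi: "yi \<in> {1, -1}"
    and wrong: "\<forall>j\<in>{1, -1}. of_int j \<noteq> yi \<longrightarrow> Fj q m d W j x1 x2 \<le> 2"
  shows "(2 + Fj q m d W 1 x1 x2)\<^sup>2 + (2 + Fj q m d W (-1) x1 x2)\<^sup>2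
           \<le> (8 + max (yi * fnet q m d W x1 x2) 0)\<^sup>2"
proof (cases "yi = 1")
  case True
  then have "Fj q m d W (-1) x1 x2 \<le> 2"
    using wrong by auto
  from two_class_square_le[OF Fj_nonneg Fj_nonneg this] show ?thesis
    using True by (simp add: fnet_def)
next
  case False
  then have "yi = -1" "Fj q m d W 1 x1 x2 \<le> 2"
    using yi wrong by auto
  from two_class_square_le[OF Fj_nonneg[of q m d W "-1"] Fj_nonneg this(2)] show ?thesis
    using \<open>yi = -1\<close> by (simp add: fnet_def add.commute)
qed

lemma sample_grad_square:
  assumes "yi \<in> {1, -1}" "j \<in> {1, -1}"
  shows "(sample_grad q m d W yi x1 x2 j r k)\<^sup>2 = (dlogloss (yi * fnet q m d W x1 x2))\<^sup>2 *
           ((dact q (vinner d (W j r) x1) * x1 k + dact q (vinner d (W j r) x2) * x2 k) / real m)\<^sup>2"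
proof -
  have "(yi * of_int j)\<^sup>2 = 1"
    using assms by auto
  moreover have "sample_grad q m d W yi x1 x2 j r k = (yi * of_int j) * (dlogloss (yi * fnet q m d W x1 x2) *
      ((dact q (vinner d (W j r) x1) * x1 k + dact q (vinner d (W j r) x2) * x2 k) / real m))"
    unfolding sample_grad_def by (simp add: mult_ac)
  ultimately show ?thesis
    by (simp only: power_mult_distrib)
qed

lemma frob2_sample_grad_le:
  assumes q: "q \<ge> 1" and m: "m \<ge> 1" and yi: "yi \<in> {1, -1}"
    and M: "vinner d x1 x1 \<le> M" "vinner d x2 x2 \<le> M"
    and wrong: "\<forall>j\<in>{1, -1}. of_int j \<noteq> yi \<longrightarrow> Fj q m d W j x1 x2 \<le> 2"
  shows "frob2 m d (sample_grad q m d W yi x1 x2) \<le> 128 * q\<^sup>2 * M * logloss (yi * fnet q m d W x1 x2)"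
proof -
  define z where "z = yi * fnet q m d W x1 x2"
  define S where "S j = (\<Sum>r<m. \<Sum>k<d. ((dact q (vinner d (W j r) x1) * x1 k
                           + dact q (vinner d (W j r) x2) * x2 k) / real m)\<^sup>2)" for j
  have M0: "M \<ge> 0"
    using order_trans[OF vinner_self_nonneg M(1)] .
  have S_le: "S j \<le> 2 * M * q\<^sup>2 * (2 + Fj q m d W j x1 x2)\<^sup>2" for j
    unfolding S_def by (rule neuron_grads_square_le[OF q m M])
  have "frob2 m d (sample_grad q m d W yi x1 x2) = (\<Sum>j\<in>{1, -1::int}. (dlogloss z)\<^sup>2 * S j)"
    unfolding frob2_def S_def z_def sum_distrib_left using yi by (intro sum.cong refl) (simp add: sample_grad_square)
  also have "\<dots> = (dlogloss z)\<^sup>2 * (S 1 + S (-1))"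
    by (simp add: distrib_left)
  also have "\<dots> \<le> (dlogloss z)\<^sup>2 * (2 * M * q\<^sup>2 * ((2 + Fj q m d W 1 x1 x2)\<^sup>2 + (2 + Fj q m d W (-1) x1 x2)\<^sup>2))"
    using S_le[of 1] S_le[of "-1"] by (intro mult_left_mono) (simp_all add: distrib_left)
  also have "\<dots> \<le> (dlogloss z)\<^sup>2 * (2 * M * q\<^sup>2 * (8 + max z 0)\<^sup>2)"
    unfolding z_def using class_outputs_square_le[OF yi wrong] M0 by (intro mult_left_mono) auto
  also have "\<dots> = 2 * M * q\<^sup>2 * ((dlogloss z)\<^sup>2 * (8 + max z 0)\<^sup>2)"
    by (simp add: mult_ac)
  also have "\<dots> \<le> 2 * M * q\<^sup>2 * (64 * logloss z)"
    using M0 by (intro mult_left_mono dlogloss_square_le_logloss) auto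
  finally show ?thesis
    by (simp add: z_def mult_ac)
qed

lemma frob2_grad_LS_le:
  assumes q: "q > 1" and m: "m \<ge> 1" and n: "n \<ge> 1" and y: "\<forall>i<n. y i \<in> {1, -1}"
    and M: "vinner d mu mu \<le> M" "\<forall>i<n. vinner d (xi i) (xi i) \<le> M"
    and wrong: "\<forall>i<n. \<forall>j\<in>{1, -1}. of_int j \<noteq> y i \<longrightarrow> Fj q m d W j (\<lambda>k. y i * mu k) (xi i) \<le> 2"
  shows "frob2 m d (grad (LS q m d n y mu xi) W) \<le> 128 * q\<^sup>2 * M * LS q m d n y mu xi W"
proof -
  define G where "G i = sample_grad q m d W (y i) (\<lambda>k. y i * mu k) (xi i)" for i
  have "frob2 m d (grad (LS q m d n y mu xi) W) = frob2 m d (\<lambda>j r k. (1 / real n) * (\<Sum>i<n. G i j r k))"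
    unfolding frob2_def G_def using q by (intro sum.cong refl) (auto simp: grad_LS)
  also have "\<dots> \<le> (1 / real n) * (\<Sum>i<n. frob2 m d (G i))"
    using n by (rule frob2_mean_le)
  also have "\<dots> \<le> (1 / real n) * (\<Sum>i<n. 128 * q\<^sup>2 * M * logloss (y i * fnet q m d W (\<lambda>k. y i * mu k) (xi i)))"
  proof (intro mult_left_mono sum_mono)
    fix i assume "i \<in> {..<n}"
    moreover have "vinner d (\<lambda>k. y i * mu k) (\<lambda>k. y i * mu k) = (y i)\<^sup>2 * vinner d mu mu"
      by (simp add: vinner_scale_left vinner_scale_right power2_eq_square)
    ultimately show "frob2 m d (G i) \<le> 128 * q\<^sup>2 * M * logloss (y i * fnet q m d W (\<lambda>k. y i * mu k) (xi i))"
      unfolding G_def using q m y M wrong by (intro frob2_sample_grad_le) auto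
  qed simp
  also have "\<dots> = 128 * q\<^sup>2 * M * LS q m d n y mu xi W"
    by (simp add: LS_def sum_distrib_left)
  finally show ?thesis .
qed

section \<open>Gradient descent: signal and noise components\<close>

locale gd_run =
  fixes q :: real and m d n :: nat and mu :: "nat \<Rightarrow> real" and y :: "nat \<Rightarrow> real"
    and xi :: "nat \<Rightarrow> nat \<Rightarrow> real" and W0 :: "int \<Rightarrow> nat \<Rightarrow> nat \<Rightarrow> real" and eta :: real
  assumes q: "q > 1" and m: "m \<ge> 1" and n: "n \<ge> 1" and eta: "eta > 0"
    and labels: "\<forall>i<n. y i \<in> {1, -1}"
    and noise_orth: "\<forall>i<n. vinner d (xi i) mu = 0"
    and noise_pos: "\<forall>i<n. vinner d (xi i) (xi i) > 0"
begin

definition weights :: "nat \<Rightarrow> int \<Rightarrow> nat \<Rightarrow> nat \<Rightarrow> real" where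
  "weights t = gd (LS q m d n y mu xi) eta W0 t"

definition margin :: "nat \<Rightarrow> nat \<Rightarrow> real" where
  "margin t i = y i * fnet q m d (weights t) (\<lambda>k. y i * mu k) (xi i)"

definition noise_corr :: "nat \<Rightarrow> int \<Rightarrow> nat \<Rightarrow> nat \<Rightarrow> real" where
  "noise_corr t j r i = vinner d (weights t j r) (xi i)"

lemma label_square: "i < n \<Longrightarrow> y i * y i = 1"
  using labels by auto

lemma vinner_weights_Suc:
  assumes "j \<in> {1, -1}" "r < m"
  shows "vinner d (weights (Suc t) j r) v = vinner d (weights t j r) v
     - eta / real n * (\<Sum>i<n. vinner d (sample_grad q m d (weights t) (y i) (\<lambda>k. y i * mu k) (xi i) j r) v)"
proof -
  have "vinner d (weights (Suc t) j r) v
      = vinner d (weights t j r) v - eta * (\<Sum>k<d. grad (LS q m d n y mu xi) (weights t) j r k * v k)"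
    unfolding vinner_def weights_def by (simp add: algebra_simps sum_subtractf sum_distrib_left)
  also have "(\<Sum>k<d. grad (LS q m d n y mu xi) (weights t) j r k * v k)
      = 1 / real n * (\<Sum>i<n. vinner d (sample_grad q m d (weights t) (y i) (\<lambda>k. y i * mu k) (xi i) j r) v)"
    using q assms unfolding vinner_def
    by (simp add: grad_LS sum_distrib_right sum_distrib_left mult.assoc flip: sum.swap[of _ "{..<n}"])
  finally show ?thesis
    by simp
qed

text \<open>Since the noise is orthogonal to \<open>mu\<close>, only the signal patch moves \<open>vinner d w mu\<close>, and
  it moves it in the direction of the class sign.\<close>

lemma signal_corr_Suc_ge:
  assumes j: "j \<in> {1, -1}" and r: "r < m"
  shows "of_int j * vinner d (weights t j r) mu \<le> of_int j * vinner d (weights (Suc t) j r) mu"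
proof -
  have sample_step: "of_int j * vinner d (sample_grad q m d (weights t) (y i) (\<lambda>k. y i * mu k) (xi i) j r) mu \<le> 0"
    if i: "i < n" for i
  proof -
    define A where "A = dact q (vinner d (weights t j r) (\<lambda>k. y i * mu k))"
    have "vinner d (sample_grad q m d (weights t) (y i) (\<lambda>k. y i * mu k) (xi i) j r) mu
        = dlogloss (margin t i) * y i * of_int j * (A * (y i * vinner d mu mu)) / real m"
      using i noise_orth by (simp add: vinner_sample_grad vinner_scale_left margin_def A_def)
    then have "of_int j * vinner d (sample_grad q m d (weights t) (y i) (\<lambda>k. y i * mu k) (xi i) j r) mu
        = (of_int j * of_int j) * (y i * y i) * (dlogloss (margin t i) * (A * vinner d mu mu) / real m)"
      by (simp add: mult_ac)
    also have "\<dots> = dlogloss (margin t i) * (A * vinner d mu mu) / real m"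
      using j label_square[OF i] by auto
    also have "\<dots> \<le> 0"
      using dlogloss_neg q vinner_self_nonneg unfolding A_def
      by (intro divide_nonpos_nonneg mult_nonpos_nonneg mult_nonneg_nonneg dact_nonneg) (auto intro: less_imp_le)
    finally show ?thesis .
  qed
  define S where "S = (\<Sum>i<n. vinner d (sample_grad q m d (weights t) (y i) (\<lambda>k. y i * mu k) (xi i) j r) mu)"
  have "of_int j * S \<le> 0"
    unfolding S_def sum_distrib_left using sample_step by (intro sum_nonpos) auto
  then have "eta / real n * (of_int j * S) \<le> 0"
    using eta by (intro mult_nonneg_nonpos[of "eta / real n"]) auto
  moreover have "of_int j * vinner d (weights (Suc t) j r) mu
      = of_int j * vinner d (weights t j r) mu - eta / real n * (of_int j * S)"
    by (simp add: vinner_weights_Suc[OF j r] S_def right_diff_distrib mult.left_commute)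
  ultimately show ?thesis
    by linarith
qed

lemma signal_corr_ge_init:
  assumes "j \<in> {1, -1}" "r < m"
  shows "of_int j * vinner d (weights t j r) mu \<ge> of_int j * vinner d (W0 j r) mu"
proof (induction t)
  case 0
  then show ?case
    by (simp add: weights_def)
next
  case (Suc t)
  then show ?case
    using signal_corr_Suc_ge[OF assms, of t] by linarith
qed

text \<open>The coefficient of \<open>xi i / vinner d (xi i) (xi i)\<close> accumulated in \<open>weights t j r\<close>
  (the paper's \<open>\<rho>\<^sub>j\<^sub>,\<^sub>r\<^sub>,\<^sub>i\<^sup>(\<^sup>t\<^sup>)\<close>).\<close>

definition noise_coef_step :: "nat \<Rightarrow> int \<Rightarrow> nat \<Rightarrow> nat \<Rightarrow> real" where
  "noise_coef_step t j r i = - (of_int j * y i) * (eta * vinner d (xi i) (xi i) / real n)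
                               * (dlogloss (margin t i) * (dact q (noise_corr t j r i) / real m))"

definition noise_coef :: "nat \<Rightarrow> int \<Rightarrow> nat \<Rightarrow> nat \<Rightarrow> real" where
  "noise_coef t j r i = (\<Sum>s<t. noise_coef_step s j r i)"

lemma noise_coef_0 [simp]: "noise_coef 0 j r i = 0"
  by (simp add: noise_coef_def)

lemma noise_coef_Suc: "noise_coef (Suc t) j r i = noise_coef t j r i + noise_coef_step t j r i"
  by (simp add: noise_coef_def)

lemma noise_corr_decomp:
  assumes j: "j \<in> {1, -1}" and r: "r < m" and i0: "i0 < n"
  shows "noise_corr t j r i0 = noise_corr 0 j r i0
           + (\<Sum>i<n. noise_coef t j r i * vinner d (xi i) (xi i0) / vinner d (xi i) (xi i))"
proof (induction t)
  case 0
  then show ?case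
    by simp
next
  case (Suc t)
  have step: "- eta / real n * vinner d (sample_grad q m d (weights t) (y i) (\<lambda>k. y i * mu k) (xi i) j r) (xi i0)
      = noise_coef_step t j r i * vinner d (xi i) (xi i0) / vinner d (xi i) (xi i)" if i: "i < n" for i
  proof -
    have "vinner d (\<lambda>k. y i * mu k) (xi i0) = 0"
      using noise_orth i0 by (simp add: vinner_scale_left vinner_commute)
    moreover have "vinner d (xi i) (xi i) \<noteq> 0"
      using noise_pos i by auto
    ultimately show ?thesis
      by (simp add: vinner_sample_grad noise_coef_step_def margin_def noise_corr_def field_simps)
  qed
  have "noise_corr (Suc t) j r i0 = noise_corr t j r i0
      + (\<Sum>i<n. - eta / real n * vinner d (sample_grad q m d (weights t) (y i) (\<lambda>k. y i * mu k) (xi i) j r) (xi i0))"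
    by (simp add: noise_corr_def vinner_weights_Suc[OF j r] sum_distrib_left sum_negf)
  also have "\<dots> = noise_corr t j r i0
      + (\<Sum>i<n. noise_coef_step t j r i * vinner d (xi i) (xi i0) / vinner d (xi i) (xi i))"
    using step by simp
  finally show ?case
    using Suc by (simp add: noise_coef_Suc distrib_right add_divide_distrib sum.distrib)
qed

end

section \<open>The wrong-class outputs stay bounded\<close>

locale gd_noise_control = gd_run +
  fixes Bx K R H T :: real
  assumes q_ge_2: "q \<ge> 2"
    and init_signal: "\<forall>j\<in>{1, -1}. \<forall>r<m. \<bar>vinner d (W0 j r) mu\<bar> \<le> 1"
    and init_noise: "\<forall>j\<in>{1, -1}. \<forall>r<m. \<forall>i<n. \<bar>vinner d (W0 j r) (xi i)\<bar> \<le> Bx"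
    and noise_overlap: "\<forall>i<n. \<forall>i'<n. i' \<noteq> i \<longrightarrow> \<bar>vinner d (xi i') (xi i)\<bar> / vinner d (xi i') (xi i') \<le> K"
    and K_nonneg: "K \<ge> 0"
    and R_ge_4: "R \<ge> 4"
    and cross_small: "Bx + real n * R * K \<le> 1 / 2"
    and step_size: "\<forall>i<n. eta * vinner d (xi i) (xi i) \<le> H"
    and step_small: "exp 2 * q * H \<le> 1 / 2"
    and horizon: "T * (exp 2 * q * H * exp (- (R\<^sup>2 / (8 * real m)))) \<le> 1 / 2"
begin

text \<open>Once \<open>noise_corr t j r i \<ge> R / 2\<close> for the correct class, the loss derivative is so small that
  the coefficient grows by at most \<open>drift\<close> per step; \<open>cross_bound\<close> bounds the contribution of
  the initialisation and of all other samples to \<open>noise_corr\<close>.\<close>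

definition drift :: real where
  "drift = exp 2 * q * H * exp (- (R\<^sup>2 / (8 * real m)))"

definition cross_bound :: real where
  "cross_bound = Bx + real n * R * K"

definition coef_bounds :: "nat \<Rightarrow> bool" where
  "coef_bounds t \<longleftrightarrow> (\<forall>j\<in>{1, -1}. \<forall>r<m. \<forall>i<n.
     (of_int j = y i \<longrightarrow> 0 \<le> noise_coef t j r i \<and> noise_coef t j r i \<le> R - 1 / 2 + real t * drift) \<and>
     (of_int j \<noteq> y i \<longrightarrow> - cross_bound - q * H \<le> noise_coef t j r i \<and> noise_coef t j r i \<le> 0))"

lemma H_nonneg: "H \<ge> 0"
proof -
  have "0 < eta * vinner d (xi 0) (xi 0)" "eta * vinner d (xi 0) (xi 0) \<le> H"
    using eta noise_pos step_size n by auto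
  then show ?thesis
    by linarith
qed

lemma qH_le: "q * H \<le> 1 / 2"
proof -
  have "1 * (q * H) \<le> exp 2 * (q * H)"
    using q H_nonneg by (intro mult_right_mono) auto
  then show ?thesis
    using step_small by (simp add: mult.assoc)
qed

lemma drift_nonneg: "drift \<ge> 0"
  unfolding drift_def using q H_nonneg by simp

lemma cross_bound_nonneg: "cross_bound \<ge> 0"
proof -
  have "\<bar>vinner d (W0 1 0) (xi 0)\<bar> \<le> Bx"
    using init_noise m n by auto
  then show ?thesis
    unfolding cross_bound_def using K_nonneg R_ge_4 by simp
qed

lemma cross_bound_le: "cross_bound \<le> 1 / 2"
  unfolding cross_bound_def by (rule cross_small)

lemma abs_noise_coef_le:
  assumes "coef_bounds t" "real t * drift \<le> 1 / 2" "j \<in> {1, -1}" "r < m" "i < n"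
  shows "\<bar>noise_coef t j r i\<bar> \<le> R"
  using assms qH_le cross_bound_le R_ge_4 unfolding coef_bounds_def
  by (cases "of_int j = y i") fastforce+

lemma noise_corr_near_coef:
  assumes bounds: "coef_bounds t" "real t * drift \<le> 1 / 2" and j: "j \<in> {1, -1}" and r: "r < m" and i0: "i0 < n"
  shows "\<bar>noise_corr t j r i0 - noise_coef t j r i0\<bar> \<le> cross_bound"
proof -
  define f where "f i = noise_coef t j r i * vinner d (xi i) (xi i0) / vinner d (xi i) (xi i)" for i
  have "(\<Sum>i<n. f i) = f i0 + (\<Sum>i\<in>{..<n} - {i0}. f i)"
    using i0 by (subst sum.remove[of "{..<n}" i0]) auto
  moreover have "f i0 = noise_coef t j r i0"
    unfolding f_def using noise_pos i0 by auto
  moreover have "\<bar>\<Sum>i\<in>{..<n} - {i0}. f i\<bar> \<le> real n * R * K"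
  proof -
    have "\<bar>\<Sum>i\<in>{..<n} - {i0}. f i\<bar> \<le> (\<Sum>i\<in>{..<n} - {i0}. \<bar>f i\<bar>)"
      by (rule sum_abs)
    also have "\<dots> \<le> (\<Sum>i\<in>{..<n} - {i0}. R * K)"
    proof (rule sum_mono)
      fix i assume "i \<in> {..<n} - {i0}"
      then have i: "i < n" "i \<noteq> i0"
        by auto
      have "\<bar>f i\<bar> = \<bar>noise_coef t j r i\<bar> * (\<bar>vinner d (xi i) (xi i0)\<bar> / vinner d (xi i) (xi i))"
        unfolding f_def using noise_pos i(1) by (simp add: abs_mult abs_of_pos)
      also have "\<dots> \<le> R * K"
        using abs_noise_coef_le[OF bounds j r i(1)] noise_overlap noise_pos i0 i
        by (intro mult_mono) auto
      finally show "\<bar>f i\<bar> \<le> R * K" .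
    qed
    also have "\<dots> \<le> real n * (R * K)"
      using i0 R_ge_4 K_nonneg by (simp add: mult_right_mono)
    finally show ?thesis
      by (simp add: mult.assoc)
  qed
  moreover have "\<bar>noise_corr 0 j r i0\<bar> \<le> Bx"
    using init_noise j r i0 by (auto simp: noise_corr_def weights_def)
  ultimately show ?thesis
    using noise_corr_decomp[OF j r i0, of t] unfolding cross_bound_def f_def by linarith
qed

lemma Fj_wrong_class_le_2:
  assumes bounds: "coef_bounds t" "real t * drift \<le> 1 / 2" and i: "i < n"
    and j: "j \<in> {1, -1}" and wrong: "of_int j \<noteq> y i"
  shows "Fj q m d (weights t) j (\<lambda>k. y i * mu k) (xi i) \<le> 2"
proof -
  have yj: "y i = - of_int j"
    using labels i j wrong by auto
  have each: "act q (vinner d (weights t j r) (\<lambda>k. y i * mu k)) + act q (vinner d (weights t j r) (xi i)) \<le> 2"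
    if r: "r < m" for r
  proof -
    have "vinner d (weights t j r) (\<lambda>k. y i * mu k) = - (of_int j * vinner d (weights t j r) mu)"
      using vinner_scale_right[of d "weights t j r" "y i" mu] yj by simp
    also have "\<dots> \<le> - (of_int j * vinner d (W0 j r) mu)"
      using signal_corr_ge_init[OF j r, of t] by linarith
    also have "\<dots> \<le> 1"
      using init_signal j r by (auto simp: abs_le_iff)
    finally have signal: "vinner d (weights t j r) (\<lambda>k. y i * mu k) \<le> 1" .
    have "noise_coef t j r i \<le> 0"
      using bounds(1) j r i wrong unfolding coef_bounds_def by blast
    then have noise: "vinner d (weights t j r) (xi i) \<le> 1"
      using noise_corr_near_coef[OF bounds j r i] cross_bound_le by (simp add: noise_corr_def)
    show ?thesis
      using act_le_1[of q, OF _ signal] act_le_1[of q, OF _ noise] q by linarith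
  qed
  have "(\<Sum>r<m. act q (vinner d (weights t j r) (\<lambda>k. y i * mu k)) + act q (vinner d (weights t j r) (xi i)))
      \<le> (\<Sum>r<m. 2)"
    using each by (intro sum_mono) auto
  then show ?thesis
    unfolding Fj_def using m by (simp add: field_simps)
qed

lemma margin_eq:
  assumes "i < n" "j \<in> {1, -1}" "of_int j = y i"
  shows "margin t i = Fj q m d (weights t) j (\<lambda>k. y i * mu k) (xi i)
                      - Fj q m d (weights t) (- j) (\<lambda>k. y i * mu k) (xi i)"
  using assms(2) unfolding margin_def fnet_def assms(3)[symmetric] by auto

lemma abs_dlogloss_margin_le:
  assumes bounds: "coef_bounds t" "real t * drift \<le> 1 / 2" and i: "i < n" and r: "r < m"
    and j: "j \<in> {1, -1}" and right: "of_int j = y i"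
  shows "\<bar>dlogloss (margin t i)\<bar> \<le> exp 2 * exp (- (act q (noise_corr t j r i) / real m))"
proof -
  have "act q (noise_corr t j r i)
      \<le> (\<Sum>r<m. act q (vinner d (weights t j r) (\<lambda>k. y i * mu k)) + act q (vinner d (weights t j r) (xi i)))"
    unfolding noise_corr_def using r
    by (intro order_trans[OF _ member_le_sum[of r]]) (auto intro: add_nonneg_nonneg act_nonneg)
  then have "act q (noise_corr t j r i) / real m \<le> Fj q m d (weights t) j (\<lambda>k. y i * mu k) (xi i)"
    unfolding Fj_def by (simp add: divide_right_mono)
  moreover have "Fj q m d (weights t) (- j) (\<lambda>k. y i * mu k) (xi i) \<le> 2"
    using j right labels i by (intro Fj_wrong_class_le_2[OF bounds i]) auto
  ultimately have "margin t i \<ge> act q (noise_corr t j r i) / real m - 2"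
    using margin_eq[OF i j right, of t] by linarith
  then have "exp (- margin t i) \<le> exp 2 * exp (- (act q (noise_corr t j r i) / real m))"
    by (simp flip: exp_add)
  then show ?thesis
    using abs_dlogloss_le_exp[of "margin t i"] by linarith
qed

lemma noise_coef_step_eq:
  "noise_coef_step t j r i = (of_int j * y i) * (eta * vinner d (xi i) (xi i) / real n)
     * (\<bar>dlogloss (margin t i)\<bar> * (dact q (noise_corr t j r i) / real m))"
  using dlogloss_neg[of "margin t i"] by (simp add: noise_coef_step_def)

lemma step_factor_bounds:
  assumes "i < n"
  shows "0 \<le> eta * vinner d (xi i) (xi i) / real n" "eta * vinner d (xi i) (xi i) / real n \<le> H"
proof -
  have "eta * vinner d (xi i) (xi i) > 0"
    using eta noise_pos assms by simp
  then show "0 \<le> eta * vinner d (xi i) (xi i) / real n"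
    by simp
  have "eta * vinner d (xi i) (xi i) / real n \<le> eta * vinner d (xi i) (xi i)"
    using \<open>eta * vinner d (xi i) (xi i) > 0\<close> n by (simp add: divide_le_eq mult_le_cancel_left1)
  also have "\<dots> \<le> H"
    using step_size assms by simp
  finally show "eta * vinner d (xi i) (xi i) / real n \<le> H" .
qed

lemma correct_class_step_bounds:
  assumes bounds: "coef_bounds t" "real t * drift \<le> 1 / 2" and i: "i < n" and r: "r < m"
    and j: "j \<in> {1, -1}" and right: "of_int j = y i"
  shows "0 \<le> noise_coef_step t j r i" "noise_coef_step t j r i \<le> exp 2 * q * H"
    and "noise_corr t j r i \<ge> R / 2 \<Longrightarrow> noise_coef_step t j r i \<le> drift"
proof -
  define P where "P = eta * vinner d (xi i) (xi i) / real n"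
  define b where "b = noise_corr t j r i"
  define Q where "Q = \<bar>dlogloss (margin t i)\<bar> * (dact q b / real m)"
  have P: "0 \<le> P" "P \<le> H"
    unfolding P_def using step_factor_bounds[OF i] by auto
  have step: "noise_coef_step t j r i = P * Q"
    unfolding noise_coef_step_eq P_def Q_def b_def right using label_square[OF i] by simp
  have Q0: "0 \<le> Q"
    unfolding Q_def using q by (simp add: dact_nonneg)
  have "Q \<le> exp 2 * exp (- (act q b / real m)) * (dact q b / real m)"
    unfolding Q_def b_def using abs_dlogloss_margin_le[OF bounds i r j right] q
    by (intro mult_right_mono) (auto simp: dact_nonneg)
  then have Q_le: "Q \<le> exp 2 * (dact q b / real m * exp (- (act q b / real m)))"
    by (simp add: mult_ac)
  have "exp 2 * (dact q b / real m * exp (- (act q b / real m))) \<le> exp 2 * q"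
    using dact_mult_exp_neg_act_le[of q "real m" b] q m by (intro mult_left_mono) auto
  with Q_le have "Q \<le> exp 2 * q"
    by linarith
  then show "0 \<le> noise_coef_step t j r i" "noise_coef_step t j r i \<le> exp 2 * q * H"
    unfolding step using P Q0 mult_mono[OF P(2) \<open>Q \<le> exp 2 * q\<close>] H_nonneg by (auto simp: mult_ac)
  assume "noise_corr t j r i \<ge> R / 2"
  then have "exp 2 * (dact q b / real m * exp (- (act q b / real m)))
      \<le> exp 2 * (q * exp (- (R\<^sup>2 / (8 * real m))))"
    using R_ge_4 q_ge_2 m by (intro mult_left_mono dact_mult_exp_neg_act_le_tail) (auto simp: b_def)
  with Q_le have Q_small: "Q \<le> exp 2 * q * exp (- (R\<^sup>2 / (8 * real m)))"
    by (simp add: mult.assoc)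
  then show "noise_coef_step t j r i \<le> drift"
    unfolding step drift_def using mult_mono[OF P(2) Q_small H_nonneg Q0] by (simp add: mult_ac)
qed

lemma wrong_class_step_bounds:
  assumes i: "i < n" and j: "j \<in> {1, -1}" and wrong: "of_int j \<noteq> y i"
  shows "noise_coef_step t j r i \<le> 0"
    and "noise_corr t j r i \<le> 0 \<Longrightarrow> noise_coef_step t j r i = 0"
    and "noise_corr t j r i \<le> 1 \<Longrightarrow> - (q * H) \<le> noise_coef_step t j r i"
proof -
  define P where "P = eta * vinner d (xi i) (xi i) / real n"
  define b where "b = noise_corr t j r i"
  define Q where "Q = \<bar>dlogloss (margin t i)\<bar> * (dact q b / real m)"
  have P: "0 \<le> P" "P \<le> H"
    unfolding P_def using step_factor_bounds[OF i] by auto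
  have "of_int j * y i = -1"
    using labels i j wrong by auto
  then have step: "noise_coef_step t j r i = - (P * Q)"
    unfolding noise_coef_step_eq P_def Q_def b_def by simp
  have Q0: "0 \<le> Q"
    unfolding Q_def using q by (simp add: dact_nonneg)
  show "noise_coef_step t j r i \<le> 0"
    unfolding step using P Q0 by simp
  show "noise_corr t j r i \<le> 0 \<Longrightarrow> noise_coef_step t j r i = 0"
    unfolding step Q_def b_def by (simp add: dact_eq_0)
  assume "noise_corr t j r i \<le> 1"
  then have "dact q b / real m \<le> q"
    using dact_le_q[of q b] dact_nonneg[of q b] q m by (simp add: b_def divide_le_eq order_trans)
  then have "Q \<le> 1 * q"
    unfolding Q_def using abs_dlogloss_le_1 q by (intro mult_mono) (auto simp: dact_nonneg)
  then have "P * Q \<le> H * q"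
    using P Q0 by (intro mult_mono) auto
  then show "- (q * H) \<le> noise_coef_step t j r i"
    unfolding step by (simp add: mult.commute)
qed

lemma coef_bounds_0: "coef_bounds 0"
proof -
  have "0 \<le> q * H"
    using q H_nonneg by simp
  then show ?thesis
    unfolding coef_bounds_def using R_ge_4 cross_bound_nonneg by auto
qed

lemma correct_coef_Suc_bounds:
  assumes bounds: "coef_bounds t" "real t * drift \<le> 1 / 2"
    and j: "j \<in> {1, -1}" and r: "r < m" and i: "i < n" and right: "of_int j = y i"
  shows "0 \<le> noise_coef (Suc t) j r i" "noise_coef (Suc t) j r i \<le> R - 1 / 2 + real (Suc t) * drift"
proof -
  have old: "0 \<le> noise_coef t j r i" "noise_coef t j r i \<le> R - 1 / 2 + real t * drift"
    using bounds(1) j r i right unfolding coef_bounds_def by blast+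
  note step = correct_class_step_bounds[OF bounds i r j right]
  show "0 \<le> noise_coef (Suc t) j r i"
    unfolding noise_coef_Suc using old step(1) by linarith
  show "noise_coef (Suc t) j r i \<le> R - 1 / 2 + real (Suc t) * drift"
  proof (cases "noise_coef t j r i \<le> R - 1")
    case True
    moreover have "0 \<le> real (Suc t) * drift"
      using drift_nonneg by simp
    ultimately show ?thesis
      unfolding noise_coef_Suc using step(2) step_small by linarith
  next
    case False
    then have "noise_corr t j r i \<ge> R / 2"
      using noise_corr_near_coef[OF bounds j r i] cross_bound_le R_ge_4 by linarith
    then show ?thesis
      unfolding noise_coef_Suc using old step(3) by (simp add: algebra_simps)
  qed
qed

lemma wrong_coef_Suc_bounds:
  assumes bounds: "coef_bounds t" "real t * drift \<le> 1 / 2"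
    and j: "j \<in> {1, -1}" and r: "r < m" and i: "i < n" and wrong: "of_int j \<noteq> y i"
  shows "- cross_bound - q * H \<le> noise_coef (Suc t) j r i" "noise_coef (Suc t) j r i \<le> 0"
proof -
  have old: "- cross_bound - q * H \<le> noise_coef t j r i" "noise_coef t j r i \<le> 0"
    using bounds(1) j r i wrong unfolding coef_bounds_def by blast+
  have near: "\<bar>noise_corr t j r i - noise_coef t j r i\<bar> \<le> cross_bound"
    by (rule noise_corr_near_coef[OF bounds j r i])
  note step = wrong_class_step_bounds[OF i j wrong, of t r]
  show "noise_coef (Suc t) j r i \<le> 0"
    unfolding noise_coef_Suc using old step(1) by linarith
  show "- cross_bound - q * H \<le> noise_coef (Suc t) j r i"
  proof (cases "noise_coef t j r i < - cross_bound")
    case True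
    then show ?thesis
      unfolding noise_coef_Suc using near old step(2) by simp
  next
    case False
    then have "noise_corr t j r i \<le> 1"
      using near old cross_bound_le by linarith
    then show ?thesis
      unfolding noise_coef_Suc using False step(3) by linarith
  qed
qed

lemma coef_bounds_Suc:
  assumes "coef_bounds t" "real (Suc t) * drift \<le> 1 / 2"
  shows "coef_bounds (Suc t)"
  unfolding coef_bounds_def
proof (intro ballI allI impI conjI)
  have t: "real t * drift \<le> 1 / 2"
    using assms(2) drift_nonneg by (simp add: algebra_simps)
  fix j r i assume j: "j \<in> {1, -1::int}" and r: "r < m" and i: "i < n"
  show "0 \<le> noise_coef (Suc t) j r i" "noise_coef (Suc t) j r i \<le> R - 1 / 2 + real (Suc t) * drift"
    if "of_int j = y i"
    using correct_coef_Suc_bounds[OF assms(1) t j r i that] by auto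
  show "- cross_bound - q * H \<le> noise_coef (Suc t) j r i" "noise_coef (Suc t) j r i \<le> 0"
    if "of_int j \<noteq> y i"
    using wrong_coef_Suc_bounds[OF assms(1) t j r i that] by auto
qed

lemma coef_bounds_if_le_horizon:
  assumes "real t \<le> T"
  shows "coef_bounds t" "real t * drift \<le> 1 / 2"
proof -
  show "real t * drift \<le> 1 / 2"
    using mult_right_mono[OF assms drift_nonneg] horizon unfolding drift_def by linarith
  then show "coef_bounds t"
  proof (induction t)
    case 0
    show ?case
      by (rule coef_bounds_0)
  next
    case (Suc t)
    then show ?case
      using drift_nonneg by (intro coef_bounds_Suc) (auto simp: algebra_simps)
  qed
qed

lemma frob2_grad_weights_le:
  assumes "real t \<le> T" "vinner d mu mu \<le> M" "\<forall>i<n. vinner d (xi i) (xi i) \<le> M"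
  shows "frob2 m d (grad (LS q m d n y mu xi) (weights t)) \<le> 128 * q\<^sup>2 * M * LS q m d n y mu xi (weights t)"
  using q m n labels assms(2,3) Fj_wrong_class_le_2[OF coef_bounds_if_le_horizon[OF assms(1)]]
  by (intro frob2_grad_LS_le) auto

end

section \<open>The conditions of the theorem\<close>

lemma sqrt_le_mult:
  fixes x a b L :: real
  assumes "x \<le> a * L" "L \<ge> 1" "0 \<le> a" "0 \<le> b" "a \<le> b\<^sup>2"
  shows "sqrt x \<le> b * L"
proof -
  have "a * L \<le> b\<^sup>2 * L\<^sup>2"
    using assms by (intro mult_mono) (auto simp: power2_eq_square intro: order_trans[of _ "L * 1"])
  with assms have "sqrt x \<le> sqrt ((b * L)\<^sup>2)"
    by (simp add: power_mult_distrib)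
  also have "\<dots> = b * L"
    using assms by simp
  finally show ?thesis .
qed

text \<open>The hypotheses of the theorem for \<open>C = 200000 q\<close> and \<open>\<kappa> = 2\<close>.\<close>

locale theorem_conditions =
  fixes q :: real and m d n :: nat and mu :: "nat \<Rightarrow> real" and sigp sig0 eta \<delta> :: real
    and y :: "nat \<Rightarrow> real" and xi :: "nat \<Rightarrow> nat \<Rightarrow> real" and W0 :: "int \<Rightarrow> nat \<Rightarrow> nat \<Rightarrow> real"
    and T \<Lambda> :: real
  assumes q: "q > 2" and m: "m \<ge> 1" and n: "n \<ge> 1" and mu_nonzero: "\<exists>k<d. mu k \<noteq> 0"
    and sigp: "sigp > 0" and sig0: "sig0 > 0" and eta: "eta > 0" and delta: "0 < \<delta>" "\<delta> < 1"
    and labels: "\<forall>i<n. y i = 1 \<or> y i = -1" and noise_orth: "\<forall>i<n. vinner d (xi i) mu = 0"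
    and T: "T \<ge> 0" and Lambda: "\<Lambda> = ln (exp 1 + real m + real n + real d + 1 / \<delta> + T)"
    and dim: "real d \<ge> 200000 * q * \<Lambda> powr 2 * real m powr (max 2 (4 / (q - 2)))
                                  * real n powr (max 4 ((2 * q - 2) / (q - 2)))"
    and step_size: "eta \<le> 1 / (200000 * q * \<Lambda> powr 2) * min (1 / (vnorm d mu)\<^sup>2) (1 / (sigp\<^sup>2 * real d))"
    and init_scale: "sig0 \<le> 1 / (200000 * q * \<Lambda> powr 2) * real m powr (- 2 / (q - 2))
                             * real n powr (- max (1 / (q - 2)) 1) * min (1 / (sigp * sqrt (real d))) (1 / vnorm d mu)"
    and prelim: "E_prelim \<delta> m d n sigp sig0 y mu xi W0"
begin

definition slack :: real where
  "slack = 1 / (200000 * q * \<Lambda>\<^sup>2)"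

lemma ln_le_Lambda:
  shows Lambda_ge_1: "1 \<le> \<Lambda>"
    and "ln (real m) \<le> \<Lambda>" "ln (real n) \<le> \<Lambda>" "ln (1 / \<delta>) \<le> \<Lambda>" "T \<le> exp \<Lambda>"
proof -
  define S where "S = exp 1 + real m + real n + real d + 1 / \<delta> + T"
  have pos: "0 \<le> 1 / \<delta>" "0 < exp (1::real)"
    using delta by auto
  have "S > 0"
    unfolding S_def using pos T by (intro add_pos_nonneg) auto
  have \<Lambda>: "\<Lambda> = ln S"
    unfolding Lambda S_def ..
  have "exp 1 \<le> S"
    unfolding S_def using pos T by simp
  then show "1 \<le> \<Lambda>"
    unfolding \<Lambda> using \<open>S > 0\<close> by (simp add: ln_ge_iff)
  show "ln (real m) \<le> \<Lambda>" "ln (real n) \<le> \<Lambda>" "ln (1 / \<delta>) \<le> \<Lambda>"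
    unfolding \<Lambda> using m n delta pos T by (intro ln_mono; simp add: S_def)+
  show "T \<le> exp \<Lambda>"
    unfolding \<Lambda> using \<open>S > 0\<close> pos by (simp add: S_def)
qed

lemma ln_init_bounds:
  shows "ln (8 * real m / \<delta>) \<le> 5 * \<Lambda>" "ln (8 * real m * real n / \<delta>) \<le> 6 * \<Lambda>"
    and "ln (4 * real n ^ 2 / \<delta>) \<le> 5 * \<Lambda>" "ln (4 * real n ^ 2 / \<delta>) \<ge> 0"
    and "ln (8 * real m * real n / \<delta>) \<ge> 0"
proof -
  have ln2: "ln (8::real) \<le> 3" "ln (4::real) \<le> 2"
    using ln_2_less_1 ln_realpow[of 2 3] ln_realpow[of 2 2] by auto
  have pos: "real m > 0" "real n > 0"
    using m n by auto
  show "ln (8 * real m / \<delta>) \<le> 5 * \<Lambda>"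
    using ln2 ln_le_Lambda pos delta by (simp add: ln_mult ln_div)
  show "ln (8 * real m * real n / \<delta>) \<le> 6 * \<Lambda>"
    using ln2 ln_le_Lambda pos delta by (simp add: ln_mult ln_div)
  show "ln (4 * real n ^ 2 / \<delta>) \<le> 5 * \<Lambda>"
    using ln2 ln_le_Lambda pos delta by (simp add: ln_mult ln_div ln_realpow)
  have "1 \<le> real n ^ 2"
    using n by simp
  then have "\<delta> \<le> 4 * real n ^ 2"
    using delta by linarith
  then show "ln (4 * real n ^ 2 / \<delta>) \<ge> 0"
    using delta by (simp add: le_divide_eq)
  have "1 \<le> real m * real n"
    using m n mult_mono[of 1 "real m" 1 "real n"] by simp
  then have "\<delta> \<le> 8 * real m * real n"
    using delta by linarith
  then show "ln (8 * real m * real n / \<delta>) \<ge> 0"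
    using delta by (simp add: le_divide_eq)
qed

lemma slack_pos: "slack > 0"
  unfolding slack_def using q Lambda_ge_1 by simp

lemma Lambda_slack_le: "\<Lambda> * slack \<le> 1 / (200000 * q)"
proof -
  have "\<Lambda> * slack = 1 / (200000 * q * \<Lambda>)"
    unfolding slack_def using Lambda_ge_1 by (simp add: power2_eq_square field_simps)
  also have "\<dots> \<le> 1 / (200000 * q * 1)"
    using q Lambda_ge_1 by (intro divide_left_mono mult_left_mono) auto
  finally show ?thesis
    by simp
qed

lemma slack_le: "slack \<le> 1 / (200000 * q)"
  using Lambda_slack_le slack_pos Lambda_ge_1 mult_right_mono[of 1 \<Lambda> slack] by linarith

lemma Lambda_powr_2: "\<Lambda> powr 2 = \<Lambda>\<^sup>2"
  using Lambda_ge_1 by simp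

lemma mu_norm_pos: "vnorm d mu > 0"
proof -
  obtain k where k: "k < d" "mu k \<noteq> 0"
    using mu_nonzero by blast
  have "0 < mu k * mu k"
    using k(2) by (cases "mu k > 0") (auto simp: mult_neg_neg)
  also have "\<dots> \<le> vinner d mu mu"
    unfolding vinner_def using k(1) by (intro member_le_sum) auto
  finally show ?thesis
    unfolding vnorm_def by simp
qed

lemma dim_pos: "d \<ge> 1"
  using mu_nonzero by (cases d) auto

lemma init_scale_le: "sig0 * vnorm d mu \<le> slack" "sig0 * (sigp * sqrt (real d)) \<le> slack"
proof -
  define mn where "mn = min (1 / (sigp * sqrt (real d))) (1 / vnorm d mu)"
  have "real m powr (- 2 / (q - 2)) \<le> real m powr 0" "real n powr (- max (1 / (q - 2)) 1) \<le> real n powr 0"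
    using m n q by (intro powr_mono; simp add: divide_nonpos_pos)+
  then have pows: "real m powr (- 2 / (q - 2)) * real n powr (- max (1 / (q - 2)) 1) \<le> 1"
    using m n by (simp add: mult_le_one)
  have "mn \<ge> 0"
    unfolding mn_def using sigp mu_norm_pos by simp
  have "sig0 \<le> slack * (real m powr (- 2 / (q - 2)) * real n powr (- max (1 / (q - 2)) 1)) * mn"
    using init_scale unfolding mn_def slack_def Lambda_powr_2 by (simp add: mult.assoc)
  also have "\<dots> \<le> slack * 1 * mn"
    using pows slack_pos \<open>mn \<ge> 0\<close> by (intro mult_right_mono mult_left_mono) auto
  finally have "sig0 \<le> slack * mn"
    by simp
  then have "sig0 \<le> slack * (1 / vnorm d mu)" "sig0 \<le> slack * (1 / (sigp * sqrt (real d)))"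
    unfolding mn_def using slack_pos by (meson min.cobounded1 min.cobounded2 mult_left_mono less_imp_le order_trans)+
  then show "sig0 * vnorm d mu \<le> slack" "sig0 * (sigp * sqrt (real d)) \<le> slack"
    using mu_norm_pos sigp dim_pos by (simp_all add: field_simps)
qed

lemma step_size_le: "eta * (sigp\<^sup>2 * real d) \<le> slack"
proof -
  have "eta \<le> slack * (1 / (sigp\<^sup>2 * real d))"
    using step_size slack_pos unfolding slack_def Lambda_powr_2
    by (meson min.cobounded2 mult_left_mono less_imp_le order_trans)
  then show ?thesis
    using sigp dim_pos by (simp add: field_simps)
qed

lemma dim_ge: "real d \<ge> 200000 * q * \<Lambda>\<^sup>2 * real m * (real n)\<^sup>2"
proof -
  have "real m \<le> real m powr 2"
    using m by (simp add: power2_eq_square)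
  also have "\<dots> \<le> real m powr (max 2 (4 / (q - 2)))"
    using m by (intro powr_mono) auto
  finally have m_le: "real m \<le> real m powr (max 2 (4 / (q - 2)))" .
  have "(real n)\<^sup>2 \<le> (real n) ^ 4"
    using n by (intro power_increasing) auto
  also have "\<dots> = real n powr 4"
    using n by simp
  also have "\<dots> \<le> real n powr (max 4 ((2 * q - 2) / (q - 2)))"
    using n by (intro powr_mono) auto
  finally have n_le: "(real n)\<^sup>2 \<le> real n powr (max 4 ((2 * q - 2) / (q - 2)))" .
  have "200000 * q * \<Lambda>\<^sup>2 * real m * (real n)\<^sup>2
      \<le> 200000 * q * \<Lambda>\<^sup>2 * real m powr (max 2 (4 / (q - 2))) * real n powr (max 4 ((2 * q - 2) / (q - 2)))"
    using q m m_le n_le by (intro mult_mono mult_left_mono) auto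
  then show ?thesis
    using dim unfolding Lambda_powr_2 by linarith
qed

lemma noise_norm_bounds:
  assumes "i < n"
  shows "sigp\<^sup>2 * real d / 2 \<le> vinner d (xi i) (xi i)" "vinner d (xi i) (xi i) \<le> 3 / 2 * sigp\<^sup>2 * real d"
  using prelim assms unfolding E_prelim_def vnorm_square by auto

definition init_noise_bound :: real where
  "init_noise_bound = 2 * sqrt (ln (8 * real m * real n / \<delta>)) * sig0 * sigp * sqrt (real d)"

definition overlap_bound :: real where
  "overlap_bound = 4 * sqrt (real d * ln (4 * real n ^ 2 / \<delta>)) / real d"

definition coef_cap :: real where
  "coef_cap = 4 + sqrt (8 * real m * \<Lambda>)"

definition step_bound :: real where
  "step_bound = eta * (3 / 2 * sigp\<^sup>2 * real d)"

lemma init_signal_le_1: "\<forall>j\<in>{1, -1}. \<forall>r<m. \<bar>vinner d (W0 j r) mu\<bar> \<le> 1"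
proof (intro ballI allI impI)
  fix j :: int and r assume "j \<in> {1, -1}" "r < m"
  then have "\<bar>vinner d (W0 j r) mu\<bar> \<le> sqrt (2 * ln (8 * real m / \<delta>)) * (sig0 * vnorm d mu)"
    using prelim unfolding E_prelim_def by (auto simp: mult.assoc)
  also have "\<dots> \<le> (4 * \<Lambda>) * slack"
  proof (rule mult_mono)
    show "sqrt (2 * ln (8 * real m / \<delta>)) \<le> 4 * \<Lambda>"
      by (rule sqrt_le_mult[of _ 10]) (use ln_init_bounds(1) Lambda_ge_1 in auto)
  qed (use Lambda_ge_1 init_scale_le(1) sig0 mu_norm_pos in auto)
  also have "\<dots> \<le> 4 * (1 / (200000 * q))"
    using Lambda_slack_le by (simp add: mult.assoc)
  also have "\<dots> \<le> 1"
    using q by simp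
  finally show "\<bar>vinner d (W0 j r) mu\<bar> \<le> 1" .
qed

lemma init_noise_bound_le: "init_noise_bound \<le> 1 / 4"
proof -
  have "init_noise_bound = 2 * sqrt (ln (8 * real m * real n / \<delta>)) * (sig0 * (sigp * sqrt (real d)))"
    unfolding init_noise_bound_def by (simp add: mult.assoc)
  also have "\<dots> \<le> 2 * (3 * \<Lambda>) * slack"
  proof (intro mult_mono mult_left_mono)
    show "sqrt (ln (8 * real m * real n / \<delta>)) \<le> 3 * \<Lambda>"
      by (rule sqrt_le_mult[of _ 6]) (use ln_init_bounds(2) Lambda_ge_1 in auto)
  qed (use Lambda_ge_1 init_scale_le(2) sig0 sigp ln_init_bounds(5) in auto)
  also have "\<dots> \<le> 6 * (1 / (200000 * q))"
    using Lambda_slack_le by (simp add: mult.assoc)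
  also have "\<dots> \<le> 1 / 4"
    using q by simp
  finally show ?thesis .
qed

lemma noise_overlap_le:
  "\<forall>i<n. \<forall>i'<n. i' \<noteq> i \<longrightarrow> \<bar>vinner d (xi i') (xi i)\<bar> / vinner d (xi i') (xi i') \<le> overlap_bound"
proof (intro allI impI)
  fix i i' assume i: "i < n" and i': "i' < n" and "i' \<noteq> i"
  then have "\<bar>vinner d (xi i') (xi i)\<bar> \<le> 2 * sigp\<^sup>2 * sqrt (real d * ln (4 * real n ^ 2 / \<delta>))"
    using prelim unfolding E_prelim_def by blast
  then have "\<bar>vinner d (xi i') (xi i)\<bar> / vinner d (xi i') (xi i')
      \<le> (2 * sigp\<^sup>2 * sqrt (real d * ln (4 * real n ^ 2 / \<delta>))) / (sigp\<^sup>2 * real d / 2)"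
    using noise_norm_bounds(1)[OF i'] sigp dim_pos by (intro frac_le) auto
  also have "\<dots> = overlap_bound"
    unfolding overlap_bound_def using sigp dim_pos by (simp add: field_simps)
  finally show "\<bar>vinner d (xi i') (xi i)\<bar> / vinner d (xi i') (xi i') \<le> overlap_bound" .
qed

lemma cross_term_le: "real n * coef_cap * overlap_bound \<le> 1 / 4"
proof -
  have "coef_cap\<^sup>2 \<le> 2 * 4\<^sup>2 + 2 * (sqrt (8 * real m * \<Lambda>))\<^sup>2"
    unfolding coef_cap_def using zero_le_power2[of "4 - sqrt (8 * real m * \<Lambda>)"]
    by (simp add: power2_eq_square algebra_simps)
  also have "\<dots> \<le> 48 * real m * \<Lambda>"
    using m Lambda_ge_1 mult_mono[of 1 "real m" 1 \<Lambda>] by (simp add: algebra_simps)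
  finally have cap: "coef_cap\<^sup>2 \<le> 48 * real m * \<Lambda>" .
  have "overlap_bound\<^sup>2 = 16 * ln (4 * real n ^ 2 / \<delta>) / real d"
    unfolding overlap_bound_def using ln_init_bounds(4) dim_pos by (simp add: power_divide power_mult_distrib power2_eq_square)
  also have "\<dots> \<le> 16 * (5 * \<Lambda>) / real d"
    using ln_init_bounds(3) by (intro divide_right_mono) auto
  finally have overlap: "overlap_bound\<^sup>2 \<le> 80 * \<Lambda> / real d"
    by simp
  have "(real n * coef_cap * overlap_bound)\<^sup>2 \<le> (real n)\<^sup>2 * (48 * real m * \<Lambda>) * (80 * \<Lambda> / real d)"
    unfolding power_mult_distrib using cap overlap Lambda_ge_1
    by (intro mult_mono mult_left_mono) auto
  also have "\<dots> = 3840 * (\<Lambda>\<^sup>2 * real m * (real n)\<^sup>2) / real d"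
    by (simp add: power2_eq_square field_simps)
  also have "\<dots> \<le> 3840 * (\<Lambda>\<^sup>2 * real m * (real n)\<^sup>2) / (200000 * q * \<Lambda>\<^sup>2 * real m * (real n)\<^sup>2)"
    using dim_ge q Lambda_ge_1 m n dim_pos by (intro divide_left_mono) (auto intro!: mult_pos_pos)
  also have "\<dots> \<le> (1 / 4)\<^sup>2"
    using q Lambda_ge_1 m n by (simp add: field_simps)
  finally show ?thesis
    by (rule power2_le_imp_le) simp
qed

lemma step_bound_small: "exp 2 * q * step_bound \<le> 1 / 2"
proof -
  have "step_bound \<le> 3 / 2 * slack"
    unfolding step_bound_def using step_size_le by (simp add: algebra_simps)
  moreover have "exp (2::real) \<le> 9"
  proof -
    have "exp (2::real) = exp 1 * exp 1"
      by (simp flip: exp_add)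
    also have "\<dots> \<le> 3 * 3"
      using exp_le by (intro mult_mono) auto
    finally show ?thesis
      by simp
  qed
  moreover have "step_bound \<ge> 0"
    unfolding step_bound_def using eta by simp
  ultimately have "exp 2 * q * step_bound \<le> 9 * q * (3 / 2 * slack)"
    using q by (intro mult_mono) auto
  also have "\<dots> \<le> 9 * q * (3 / 2 * (1 / (200000 * q)))"
    using slack_le q by (intro mult_left_mono) auto
  finally show ?thesis
    using q by simp
qed

lemma horizon_le: "T * (exp 2 * q * step_bound * exp (- (coef_cap\<^sup>2 / (8 * real m)))) \<le> 1 / 2"
proof -
  have "sqrt (8 * real m * \<Lambda>) \<le> coef_cap"
    unfolding coef_cap_def by simp
  then have "(sqrt (8 * real m * \<Lambda>))\<^sup>2 \<le> coef_cap\<^sup>2"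
    using Lambda_ge_1 by (intro power_mono) auto
  then have "\<Lambda> \<le> coef_cap\<^sup>2 / (8 * real m)"
    using m Lambda_ge_1 by (simp add: field_simps)
  then have "T * exp (- (coef_cap\<^sup>2 / (8 * real m))) \<le> exp \<Lambda> * exp (- \<Lambda>)"
    using ln_le_Lambda(5) T by (intro mult_mono) auto
  then have "T * exp (- (coef_cap\<^sup>2 / (8 * real m))) \<le> 1"
    by (simp flip: exp_add)
  moreover have "0 \<le> exp 2 * q * step_bound"
    unfolding step_bound_def using q eta by simp
  ultimately have "(exp 2 * q * step_bound) * (T * exp (- (coef_cap\<^sup>2 / (8 * real m)))) \<le> exp 2 * q * step_bound"
    using mult_left_mono[of _ 1] by fastforce
  then show ?thesis
    using step_bound_small by (simp add: mult_ac)
qed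

lemma gd_noise_control_holds: "gd_noise_control q m d n mu y xi W0 eta init_noise_bound overlap_bound coef_cap step_bound T"
proof unfold_locales
  show "\<forall>i<n. y i \<in> {1, -1}"
    using labels by auto
  show "\<forall>i<n. vinner d (xi i) (xi i) > 0"
  proof (intro allI impI)
    fix i assume "i < n"
    have "0 < sigp\<^sup>2 * real d / 2"
      using sigp dim_pos by simp
    then show "vinner d (xi i) (xi i) > 0"
      using noise_norm_bounds(1)[OF \<open>i < n\<close>] by linarith
  qed
  show "\<forall>j\<in>{1, -1}. \<forall>r<m. \<forall>i<n. \<bar>vinner d (W0 j r) (xi i)\<bar> \<le> init_noise_bound"
    using prelim unfolding E_prelim_def init_noise_bound_def by blast
  show "overlap_bound \<ge> 0"
    unfolding overlap_bound_def using ln_init_bounds(4) by simp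
  show "coef_cap \<ge> 4"
    unfolding coef_cap_def using Lambda_ge_1 by simp
  show "init_noise_bound + real n * coef_cap * overlap_bound \<le> 1 / 2"
    using init_noise_bound_le cross_term_le by linarith
  show "\<forall>i<n. eta * vinner d (xi i) (xi i) \<le> step_bound"
  proof (intro allI impI)
    fix i assume "i < n"
    then show "eta * vinner d (xi i) (xi i) \<le> step_bound"
      unfolding step_bound_def using noise_norm_bounds(2) eta by (intro mult_left_mono) auto
  qed
qed (use q m n eta noise_orth init_signal_le_1 noise_overlap_le step_bound_small horizon_le in auto)

lemma frob2_grad_le_loss:
  assumes "real t \<le> T"
  shows "frob2 m d (grad (LS q m d n y mu xi) (gd (LS q m d n y mu xi) eta W0 t))
           \<le> 192 * q\<^sup>2 * max ((vnorm d mu)\<^sup>2) (sigp\<^sup>2 * real d) * LS q m d n y mu xi (gd (LS q m d n y mu xi) eta W0 t)"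
proof -
  interpret G: gd_noise_control q m d n mu y xi W0 eta init_noise_bound overlap_bound coef_cap step_bound T
    by (rule gd_noise_control_holds)
  define M where "M = 3 / 2 * max ((vnorm d mu)\<^sup>2) (sigp\<^sup>2 * real d)"
  have max: "(vnorm d mu)\<^sup>2 \<le> max ((vnorm d mu)\<^sup>2) (sigp\<^sup>2 * real d)"
    "sigp\<^sup>2 * real d \<le> max ((vnorm d mu)\<^sup>2) (sigp\<^sup>2 * real d)"
    by auto
  then have "vinner d mu mu \<le> M"
    unfolding M_def vnorm_square[symmetric] using zero_le_power2[of "vnorm d mu"] by linarith
  moreover have "\<forall>i<n. vinner d (xi i) (xi i) \<le> M"
    unfolding M_def using noise_norm_bounds(2) max by fastforce
  ultimately have "frob2 m d (grad (LS q m d n y mu xi) (G.weights t)) \<le> 128 * q\<^sup>2 * M * LS q m d n y mu xi (G.weights t)"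
    by (rule G.frob2_grad_weights_le[OF assms])
  then show ?thesis
    unfolding G.weights_def M_def by (simp add: mult_ac)
qed

end

theorem lemma5p3:
  fixes q :: real and cT :: real and kT :: nat
  assumes "q > 2" and "cT > 0"
  shows "\<exists>C \<kappa> Cout. C > 0 \<and> \<kappa> \<ge> 0 \<and> Cout > 0 \<and>
    (\<forall>(m::nat) (d::nat) (n::nat) (mu::nat \<Rightarrow> real) (sigp::real) (sig0::real) (eta::real)
       (\<epsilon>::real) (\<delta>::real) (y::nat \<Rightarrow> real) (xi::nat \<Rightarrow> nat \<Rightarrow> real)
       (W0::int \<Rightarrow> nat \<Rightarrow> nat \<Rightarrow> real).
      let Tstar = cT / eta * (1 + 1 / \<epsilon> + 1 / vnorm d mu + 1 / (real d * sigp\<^sup>2) + 1 / sig0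
                                 + real n + real m + real d) ^ kT;
          \<Lambda> = ln (exp 1 + real m + real n + real d + 1 / \<delta> + Tstar);
          L = LS q m d n y mu xi
      in
      m \<ge> 1 \<and> n \<ge> 1 \<and> (\<exists>k<d. mu k \<noteq> 0) \<and> sigp > 0 \<and> sig0 > 0 \<and> eta > 0 \<and>
      \<epsilon> > 0 \<and> 0 < \<delta> \<and> \<delta> < 1 \<and>
      (\<forall>i<n. y i = 1 \<or> y i = -1) \<and>
      (\<forall>i<n. vinner d (xi i) mu = 0) \<and>
      \<comment> \<open>condition (1)\<close>
      real d \<ge> C * \<Lambda> powr \<kappa> * real m powr (max 2 (4 / (q - 2)))
                                  * real n powr (max 4 ((2 * q - 2) / (q - 2))) \<and>
      \<comment> \<open>condition (2)\<close>
      real n \<ge> C * ln (real d) powr \<kappa> \<and> real m \<ge> C * ln (real d) powr \<kappa> \<and>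
      \<comment> \<open>condition (3)\<close>
      eta \<le> 1 / (C * \<Lambda> powr \<kappa>) * min (1 / (vnorm d mu)\<^sup>2) (1 / (sigp\<^sup>2 * real d)) \<and>
      \<comment> \<open>condition (4)\<close>
      C * \<Lambda> powr \<kappa> * real n / sqrt (real d) * min (1 / (sigp * sqrt (real d))) (1 / vnorm d mu) \<le> sig0 \<and>
      sig0 \<le> 1 / (C * \<Lambda> powr \<kappa>) * real m powr (- 2 / (q - 2)) * real n powr (- max (1 / (q - 2)) 1)
               * min (1 / (sigp * sqrt (real d))) (1 / vnorm d mu) \<and>
      E_prelim \<delta> m d n sigp sig0 y mu xi W0
      \<longrightarrow>
      (\<forall>t::nat. real t \<le> Tstar \<longrightarrow>
         frob2 m d (grad L (gd L eta W0 t))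
           \<le> Cout * max ((vnorm d mu)\<^sup>2) (sigp\<^sup>2 * real d) * L (gd L eta W0 t)))"
  unfolding Let_def
proof (rule exI[of _ "200000 * q"], rule exI[of _ "2::real"], rule exI[of _ "192 * q\<^sup>2"],
    intro conjI allI impI, goal_cases)
  case 1
  show ?case
    using assms(1) by simp
next
  case 2
  show ?case
    by simp
next
  case 3
  show ?case
    using assms(1) by simp
next
  case (4 m d n mu sigp sig0 eta \<epsilon> \<delta> y xi W0 t)
  define T where "T = cT / eta * (1 + 1 / \<epsilon> + 1 / vnorm d mu + 1 / (real d * sigp\<^sup>2) + 1 / sig0
                                 + real n + real m + real d) ^ kT"
  note hyps = 4[folded T_def]
  have "0 \<le> 1 + 1 / \<epsilon> + 1 / vnorm d mu + 1 / (real d * sigp\<^sup>2) + 1 / sig0 + real n + real m + real d"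
    using hyps by (intro add_nonneg_nonneg) (auto simp: vnorm_def vinner_self_nonneg)
  then have "T \<ge> 0"
    unfolding T_def using hyps assms(2) by simp
  then interpret theorem_conditions q m d n mu sigp sig0 eta \<delta> y xi W0 T
      "ln (exp 1 + real m + real n + real d + 1 / \<delta> + T)"
    using assms(1) hyps by unfold_locales auto
  show ?case
    using frob2_grad_le_loss hyps unfolding T_def by blast
qed

end
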